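(* Let $\Omega,\Pi\subset\mathbb{C}$ be domains and let $f, u : \mathbb{C}\times\mathbb{C} \rightarrow \mathbb{C}$ be analytic in $\Omega \times \Pi$, such that for each $p\in\Pi$, $u(\cdot,p)$ is a polynomial of degree $m$. Suppose further that for each $\pi \in \Pi$ there exist points $z_1,\ldots,z_k \in \Omega$ (with $k$ possibly depending on $\pi$) and analytic functions $u_1,\ldots,u_k : \mathbb{C}\times\mathbb{C} \rightarrow \mathbb{C}$ such that $u_j$ is a Weierstrass polynomial at $(z_j,\pi)$ for each $j$, and $u(\cdot,p) = u_1(\cdot,p)\cdots u_k(\cdot,p)$ for all $p$ in some neighborhood of $\pi$. Then there exist unique analytic functions $g, r : \Omega \times \Pi \rightarrow \mathbb{C}$ such that for each $p \in \Pi$ the function $r(\cdot,p)$ is a polynomial of degree less than $m$, and $$f(z,p) = g(z,p)\,u(z,p) + r(z,p)\quad\text{for all }(z,p)\in\Omega\times\Pi.$$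
   Context: A Weierstrass polynomial of degree $k$ is a function $u(z,p) = z^k + \alpha_{k-1}(p) z^{k-1} + \cdots + \alpha_1(p) z + \alpha_0(p)$, where each $\alpha_j:\mathbb{C}\to\mathbb{C}$ is analytic near $0$ and $\alpha_j(0)=0$. A function $v:\mathbb{C}\times\mathbb{C}\to\mathbb{C}$ is a Weierstrass polynomial at $(z_0,p_0)$ if $(z,p)\mapsto v(z+z_0,p+p_0)$ is a Weierstrass polynomial. *)

theory Defs
  imports "HOL-Complex_Analysis.Complex_Analysis" "HOL-Computational_Algebra.Polynomial"
begin

definition analytic2_on :: "(complex \<times> complex \<Rightarrow> complex) \<Rightarrow> (complex \<times> complex) set \<Rightarrow> bool" where
  "analytic2_on f S \<longleftrightarrow>
     (\<forall>w\<in>S. \<exists>e>0. \<exists>a :: nat \<Rightarrow> nat \<Rightarrow> complex.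
        \<forall>x. dist x w < e \<longrightarrow>
          ((\<lambda>(i,j). a i j * (fst x - fst w) ^ i * (snd x - snd w) ^ j) has_sum f x) UNIV)"

definition weierstrass_poly :: "(complex \<times> complex \<Rightarrow> complex) \<Rightarrow> bool" where
  "weierstrass_poly u \<longleftrightarrow>
     (\<exists>k::nat. \<exists>\<alpha> :: nat \<Rightarrow> complex \<Rightarrow> complex.
        (\<forall>j<k. \<alpha> j analytic_on {0} \<and> \<alpha> j 0 = 0) \<and>
        (\<forall>z p. u (z, p) = z ^ k + (\<Sum>j<k. \<alpha> j p * z ^ j)))"

definition weierstrass_poly_at :: "(complex \<times> complex \<Rightarrow> complex) \<Rightarrow> complex \<Rightarrow> complex \<Rightarrow> bool" where
  "weierstrass_poly_at v z0 p0 \<longleftrightarrow> weierstrass_poly (\<lambda>(z, p). v (z + z0, p + p0))"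

end

theory Submission
  imports Defs "HOL-Computational_Algebra.Fundamental_Theorem_Algebra"
begin

text \<open>For fixed p, \<open>u (-, p)\<close> is a polynomial of degree m whose zeros all lie in Om: they are the
  centres of the Weierstrass factors. So division with remainder by \<open>u (-, p)\<close> is unique, since a
  polynomial of degree below m that is a holomorphic multiple of \<open>u (-, p)\<close> on Om vanishes.
  Existence comes from Weierstrass's integral formula: for small disjoint circles around the
  centres, the quotient is \<open>1 / (2 pi i)\<close> times the sum of the circle integrals of
  \<open>f (\<zeta>, p) / (u (\<zeta>, p) * (\<zeta> - z))\<close> inside the circles, and the remainder is a polynomial whose
  coefficients are circle integrals as well. The zeros of \<open>u (-, p)\<close> stay inside the same circles
  for p near a given p0, so these formulas are continuous in (z, p) and holomorphic in each
  variable. Osgood's lemma turns this into convergent double power series.\<close>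

section \<open>Contour integrals depending on a parameter\<close>

lemma continuous_on_contour_integral_circlepath:
  fixes H :: "complex \<Rightarrow> 'a::topological_space \<Rightarrow> complex"
  assumes "0 \<le> s" and cont: "continuous_on (sphere c s \<times> W) (\<lambda>(\<zeta>, w). H \<zeta> w)"
  shows "continuous_on W (\<lambda>w. contour_integral (circlepath c s) (\<lambda>\<zeta>. H \<zeta> w))"
proof -
  have on_sphere: "circlepath c s t \<in> sphere c s" if "t \<in> {0..1}" for t
    using that path_image_circlepath_nonneg[OF \<open>0 \<le> s\<close>, of c] by (auto simp: path_image_def)
  have "continuous_on (W \<times> {0..1}) (\<lambda>x. circlepath c s (snd x))"
    using path_circlepath[of c s] unfolding path_def
    by (rule continuous_on_compose2) (auto intro!: continuous_intros)
  then have "continuous_on (W \<times> {0..1}) (\<lambda>x. (circlepath c s (snd x), fst x))"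
    by (intro continuous_on_Pair continuous_on_fst continuous_on_id)
  from continuous_on_compose2[OF cont this]
  have "continuous_on (W \<times> {0..1}) (\<lambda>x. H (circlepath c s (snd x)) (fst x))"
    using on_sphere by fastforce
  then have "continuous_on (W \<times> cbox 0 1)
      (\<lambda>(w, t). H (circlepath c s t) w * vector_derivative (circlepath c s) (at t))"
    unfolding vector_derivative_circlepath box_real case_prod_unfold
    by (intro continuous_on_mult continuous_intros)
  from integral_continuous_on_param[OF this] show ?thesis
    by (simp add: contour_integral_integral box_real)
qed

lemma holomorphic_on_if_Cauchy_integral_formula:
  assumes "open W" and cont: "continuous_on W \<Phi>"
    and cauchy: "\<And>w t v. 0 < t \<Longrightarrow> cball w t \<subseteq> W \<Longrightarrow> v \<in> ball w t \<Longrightarrow>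
      contour_integral (circlepath w t) (\<lambda>\<eta>. \<Phi> \<eta> / (\<eta> - v)) = 2 * of_real pi * \<i> * \<Phi> v"
  shows "\<Phi> holomorphic_on W"
proof -
  have "\<Phi> field_differentiable at w" if "w \<in> W" for w
  proof -
    obtain t where t: "0 < t" "cball w t \<subseteq> W"
      using \<open>open W\<close> \<open>w \<in> W\<close> open_contains_cball by blast
    have cont_sphere: "continuous_on (sphere w t) \<Phi>"
      using t sphere_cball by (blast intro: continuous_on_subset[OF cont])
    have "((\<lambda>\<eta>. \<Phi> \<eta> / (\<eta> - v) ^ 1) has_contour_integral (2 * of_real pi * \<i> * \<Phi> v)) (circlepath w t)"
      if "v \<in> ball w t" for v
    proof -
      have "(\<lambda>\<eta>. \<Phi> \<eta> / (\<eta> - v)) contour_integrable_on circlepath w t"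
        using that t cont_sphere
        by (intro contour_integrable_continuous_circlepath continuous_intros) (auto simp: dist_commute)
      then show ?thesis
        using cauchy[OF t that] has_contour_integral_integral by fastforce
    qed
    from Cauchy_next_derivative_circlepath(2)[OF _ this, of w] t cont_sphere
    have "(\<lambda>v. 2 * of_real pi * \<i> * \<Phi> v) field_differentiable at w"
      by (auto simp: field_differentiable_def path_image_circlepath_nonneg)
    then have "(\<lambda>v. (2 * of_real pi * \<i> * \<Phi> v) / (2 * of_real pi * \<i>)) field_differentiable at w"
      by (intro field_differentiable_divide field_differentiable_const) auto
    then show ?thesis
      by simp
  qed
  then show ?thesis
    using \<open>open W\<close> by (simp add: holomorphic_on_open field_differentiable_def)
qed

text \<open>The integral satisfies Cauchy's formula on small circles because each \<open>H \<zeta>\<close> does: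
  swap the two contour integrals.\<close>

lemma holomorphic_on_contour_integral_circlepath:
  assumes "open W" and "0 < s"
    and cont: "continuous_on (sphere c s \<times> W) (\<lambda>(\<zeta>, w). H \<zeta> w)"
    and hol: "\<And>\<zeta>. \<zeta> \<in> sphere c s \<Longrightarrow> H \<zeta> holomorphic_on W"
  shows "(\<lambda>w. contour_integral (circlepath c s) (\<lambda>\<zeta>. H \<zeta> w)) holomorphic_on W"
proof (rule holomorphic_on_if_Cauchy_integral_formula[OF \<open>open W\<close>])
  define \<Phi> where "\<Phi> w = contour_integral (circlepath c s) (\<lambda>\<zeta>. H \<zeta> w)" for w
  show "continuous_on W \<Phi>"
    unfolding \<Phi>_def using \<open>0 < s\<close> cont by (intro continuous_on_contour_integral_circlepath) auto
  have integrable: "(\<lambda>\<zeta>. H \<zeta> w) contour_integrable_on circlepath c s" if "w \<in> W" for w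
  proof -
    have "continuous_on (sphere c s) ((\<lambda>(\<zeta>, w). H \<zeta> w) \<circ> (\<lambda>\<zeta>. (\<zeta>, w)))"
      using that by (intro continuous_on_compose continuous_intros continuous_on_subset[OF cont]) auto
    then show ?thesis
      using \<open>0 < s\<close> by (intro contour_integrable_continuous_circlepath) (simp_all add: o_def)
  qed
  fix w t v assume t: "0 < t" "cball w t \<subseteq> W" and v: "v \<in> ball w t"
  have sphere_W: "sphere w t \<subseteq> W"
    using t sphere_cball by blast
  have cauchy_H: "contour_integral (circlepath w t) (\<lambda>\<eta>. H \<zeta> \<eta> / (\<eta> - v)) = 2 * of_real pi * \<i> * H \<zeta> v"
    if "\<zeta> \<in> sphere c s" for \<zeta>
  proof (rule contour_integral_unique, rule Cauchy_integral_circlepath)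
    show "continuous_on (cball w t) (H \<zeta>)" "H \<zeta> holomorphic_on ball w t"
      using hol[OF that] t ball_subset_cball
      by (meson holomorphic_on_imp_continuous_on holomorphic_on_subset order_trans)+
    show "norm (v - w) < t"
      using v by (simp add: dist_norm norm_minus_commute)
  qed
  have "2 * of_real pi * \<i> * \<Phi> v = contour_integral (circlepath c s) (\<lambda>\<zeta>. 2 * of_real pi * \<i> * H \<zeta> v)"
    unfolding \<Phi>_def using v t by (intro contour_integral_lmul[symmetric] integrable) auto
  also have "\<dots> = contour_integral (circlepath c s)
      (\<lambda>\<zeta>. contour_integral (circlepath w t) (\<lambda>\<eta>. H \<zeta> \<eta> / (\<eta> - v)))"
    using \<open>0 < s\<close> cauchy_H by (intro contour_integral_eq) (simp add: path_image_circlepath_nonneg)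
  also have "\<dots> = contour_integral (circlepath w t)
      (\<lambda>\<eta>. contour_integral (circlepath c s) (\<lambda>\<zeta>. H \<zeta> \<eta> / (\<eta> - v)))"
  proof (rule contour_integral_swap)
    have "continuous_on (sphere c s \<times> sphere w t) (\<lambda>x. H (fst x) (snd x))"
      using sphere_W by (intro continuous_on_subset[OF cont[unfolded case_prod_unfold]]) auto
    then have "continuous_on (sphere c s \<times> sphere w t) (\<lambda>x. H (fst x) (snd x) / (snd x - v))"
      using v by (intro continuous_intros) (auto simp: dist_commute)
    then show "continuous_on (path_image (circlepath c s) \<times> path_image (circlepath w t))
        (\<lambda>(\<zeta>, \<eta>). H \<zeta> \<eta> / (\<eta> - v))"
      using \<open>0 < s\<close> t by (simp add: path_image_circlepath_nonneg case_prod_unfold)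
  qed (simp_all add: vector_derivative_circlepath continuous_intros)
  also have "\<dots> = contour_integral (circlepath w t) (\<lambda>\<eta>. \<Phi> \<eta> / (\<eta> - v))"
    using t sphere_W unfolding \<Phi>_def
    by (intro contour_integral_eq contour_integral_div integrable) (auto simp: path_image_circlepath_nonneg)
  finally show "contour_integral (circlepath w t) (\<lambda>\<eta>. \<Phi> \<eta> / (\<eta> - v)) = 2 * of_real pi * \<i> * \<Phi> v"
    by simp
qed

lemma has_sum_diagonal:
  fixes T :: "nat \<times> nat \<Rightarrow> 'a::{topological_comm_monoid_add,t3_space}"
  assumes "(T has_sum S) UNIV"
  shows "((\<lambda>n. \<Sum>i\<le>n. T (i, n - i)) has_sum S) UNIV"
proof -
  have "bij_betw (\<lambda>(n, i). (i, n - i)) (SIGMA n:UNIV. {..n::nat}) UNIV"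
    by (intro bij_betw_byWitness[where f'="\<lambda>(i, j). (i + j, i)"]) auto
  from has_sum_reindex_bij_betw[OF this, of T] assms
  have "((\<lambda>(n, i). T (i, n - i)) has_sum S) (SIGMA n:UNIV. {..n})"
    by (simp add: case_prod_unfold)
  then show ?thesis
    by (rule has_sum_SigmaD) auto
qed

lemma summable_on_geometric_pairs:
  fixes q1 q2 :: real
  assumes "0 \<le> q1" "q1 < 1" "0 \<le> q2" "q2 < 1"
  shows "(\<lambda>(i, j). q1 ^ i * q2 ^ j) summable_on UNIV"
proof -
  have geometric: "((\<lambda>i. q ^ i) has_sum (1 / (1 - q))) UNIV" if "0 \<le> q" "q < 1" for q :: real
    using that by (intro sums_nonneg_imp_has_sum_strong geometric_sums) auto
  have "(\<lambda>i. q1 ^ i * (1 / (1 - q2))) summable_on UNIV"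
    using assms by (intro summable_on_cmult_left has_sum_imp_summable[OF geometric])
  moreover have "((\<lambda>j. q1 ^ i * q2 ^ j) has_sum q1 ^ i * (1 / (1 - q2))) UNIV" for i
    using assms by (intro has_sum_cmult_right geometric)
  ultimately have "(\<lambda>x. q1 ^ fst x * q2 ^ snd x) summable_on Sigma UNIV (\<lambda>_. UNIV)"
    using assms by (intro summable_on_SigmaI[where g="\<lambda>i. q1 ^ i * (1 / (1 - q2))"]) auto
  then show ?thesis
    by (simp add: case_prod_unfold)
qed

lemma has_sum_iterated_sums:
  fixes T :: "nat \<times> nat \<Rightarrow> 'a::{banach, uniform_topological_group_add}"
  assumes "T summable_on UNIV" and rows: "\<And>i. (\<lambda>j. T (i, j)) sums g i" and "g sums S"
  shows "(T has_sum S) UNIV"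
proof -
  have "((\<lambda>j. T (i, j)) has_sum g i) UNIV" for i
  proof -
    have "(\<lambda>j. T (i, j)) summable_on UNIV"
      using summable_on_SigmaD1[of "\<lambda>i j. T (i, j)" UNIV "\<lambda>_. UNIV"] assms(1) by simp
    then have "((\<lambda>j. T (i, j)) has_sum infsum (\<lambda>j. T (i, j)) UNIV) UNIV"
      by (rule has_sum_infsum)
    moreover from this have "infsum (\<lambda>j. T (i, j)) UNIV = g i"
      using rows[of i] has_sum_imp_sums sums_unique2 by blast
    ultimately show ?thesis
      by simp
  qed
  moreover obtain S' where S': "(T has_sum S') UNIV"
    using assms(1) has_sum_infsum by blast
  ultimately have "(g has_sum S') UNIV"
    using has_sum_SigmaD[where B="\<lambda>_. UNIV", of T] by simp
  with \<open>g sums S\<close> have "S' = S"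
    using has_sum_imp_sums sums_unique2 by blast
  with S' show ?thesis
    by simp
qed

section \<open>Separately holomorphic functions and Osgood's lemma\<close>

definition holomorphic2_on :: "(complex \<times> complex \<Rightarrow> complex) \<Rightarrow> (complex \<times> complex) set \<Rightarrow> bool" where
  "holomorphic2_on F S \<longleftrightarrow> continuous_on S F \<and>
     (\<forall>z p. (z, p) \<in> S \<longrightarrow>
        (\<lambda>z. F (z, p)) field_differentiable at z \<and> (\<lambda>p. F (z, p)) field_differentiable at p)"

lemma holomorphic2_on_subset: "holomorphic2_on F S \<Longrightarrow> T \<subseteq> S \<Longrightarrow> holomorphic2_on F T"
  unfolding holomorphic2_on_def by (auto intro: continuous_on_subset)

lemma holomorphic2_on_const: "holomorphic2_on (\<lambda>x. c) S"
  unfolding holomorphic2_on_def by auto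

lemma holomorphic2_on_uminus: "holomorphic2_on F S \<Longrightarrow> holomorphic2_on (\<lambda>x. - F x) S"
  unfolding holomorphic2_on_def by (auto intro!: continuous_intros field_differentiable_minus)

lemma holomorphic2_on_diff:
  "holomorphic2_on F S \<Longrightarrow> holomorphic2_on G S \<Longrightarrow> holomorphic2_on (\<lambda>x. F x - G x) S"
  unfolding holomorphic2_on_def by (auto intro!: continuous_intros field_differentiable_diff)

lemma holomorphic2_on_mult:
  "holomorphic2_on F S \<Longrightarrow> holomorphic2_on G S \<Longrightarrow> holomorphic2_on (\<lambda>x. F x * G x) S"
  unfolding holomorphic2_on_def by (auto intro!: continuous_intros field_differentiable_mult)

lemma holomorphic2_on_divide:
  "holomorphic2_on F S \<Longrightarrow> holomorphic2_on G S \<Longrightarrow> (\<And>x. x \<in> S \<Longrightarrow> G x \<noteq> 0) \<Longrightarrow>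
    holomorphic2_on (\<lambda>x. F x / G x) S"
  unfolding holomorphic2_on_def by (auto intro!: continuous_intros field_differentiable_divide)

lemma holomorphic2_on_sum:
  "(\<And>i. i \<in> I \<Longrightarrow> holomorphic2_on (F i) S) \<Longrightarrow> holomorphic2_on (\<lambda>x. \<Sum>i\<in>I. F i x) S"
  unfolding holomorphic2_on_def by (auto intro!: continuous_intros field_differentiable_sum)

lemma holomorphic2_on_imp_holomorphic_on_fst:
  "holomorphic2_on F (A \<times> B) \<Longrightarrow> p \<in> B \<Longrightarrow> (\<lambda>z. F (z, p)) holomorphic_on A"
  unfolding holomorphic2_on_def holomorphic_on_def by (auto intro: field_differentiable_at_within)

lemma holomorphic2_on_imp_holomorphic_on_snd:
  "holomorphic2_on F (A \<times> B) \<Longrightarrow> z \<in> A \<Longrightarrow> (\<lambda>p. F (z, p)) holomorphic_on B"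
  unfolding holomorphic2_on_def holomorphic_on_def by (auto intro: field_differentiable_at_within)

lemma holomorphic_on_uniform_limit:
  assumes "open S" "\<And>n. f n holomorphic_on S" "uniform_limit S f g sequentially"
  shows "g holomorphic_on S"
proof (rule holomorphic_uniform_sequence[OF assms(1,2)])
  fix x assume "x \<in> S"
  then obtain d where "0 < d" "cball x d \<subseteq> S"
    using assms(1) open_contains_cball by blast
  then show "\<exists>d>0. cball x d \<subseteq> S \<and> uniform_limit (cball x d) f g sequentially"
    by (intro exI[of _ d] conjI uniform_limit_on_subset[OF assms(3)])
qed

lemma holomorphic2_on_uniform_limit:
  assumes "open A" "open B" and F: "\<And>n. holomorphic2_on (F n) (A \<times> B)"
    and lim: "uniform_limit (A \<times> B) F G sequentially"
  shows "holomorphic2_on G (A \<times> B)"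
proof -
  have "continuous_on (A \<times> B) G"
    using F unfolding holomorphic2_on_def by (intro uniform_limit_theorem[OF always_eventually lim]) auto
  moreover have "(\<lambda>z. G (z, p)) holomorphic_on A" if "p \<in> B" for p
    using holomorphic2_on_imp_holomorphic_on_fst[OF F that] that
    by (intro holomorphic_on_uniform_limit[OF \<open>open A\<close> _ uniform_limit_compose'[OF lim]]) auto
  moreover have "(\<lambda>p. G (z, p)) holomorphic_on B" if "z \<in> A" for z
    using holomorphic2_on_imp_holomorphic_on_snd[OF F that] that
    by (intro holomorphic_on_uniform_limit[OF \<open>open B\<close> _ uniform_limit_compose'[OF lim]]) auto
  ultimately show ?thesis
    using assms(1,2) unfolding holomorphic2_on_def by (auto intro: holomorphic_on_imp_differentiable_at)
qed

lemma summable_diagonal_majorant: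
  fixes a :: "nat \<Rightarrow> nat \<Rightarrow> complex"
  assumes "(\<lambda>(i, j). a i j * of_real \<rho> ^ i * of_real \<rho> ^ j) summable_on UNIV" "0 \<le> \<rho>"
  shows "summable (\<lambda>n. \<Sum>i\<le>n. norm (a i (n - i)) * \<rho> ^ i * \<rho> ^ (n - i))"
proof -
  have "(\<lambda>(i, j). norm (a i j) * \<rho> ^ i * \<rho> ^ j) summable_on UNIV"
    using assms by (simp add: summable_on_iff_abs_summable_on_complex case_prod_unfold norm_mult norm_power)
  then obtain A where "((\<lambda>(i, j). norm (a i j) * \<rho> ^ i * \<rho> ^ j) has_sum A) UNIV"
    by (auto simp: summable_on_def)
  from has_sum_imp_sums[OF has_sum_diagonal[OF this]] show ?thesis
    by (auto simp: sums_iff)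
qed

lemma uniform_limit_double_power_series:
  fixes a :: "nat \<Rightarrow> nat \<Rightarrow> complex"
  assumes "0 < e"
    and series: "\<And>x. dist x (z0, p0) < e \<Longrightarrow>
      ((\<lambda>(i, j). a i j * (fst x - z0) ^ i * (snd x - p0) ^ j) has_sum F x) UNIV"
  shows "uniform_limit (ball z0 (e/3) \<times> ball p0 (e/3))
    (\<lambda>N x. \<Sum>n<N. \<Sum>i\<le>n. a i (n - i) * (fst x - z0) ^ i * (snd x - p0) ^ (n - i)) F sequentially"
proof -
  define \<rho> where "\<rho> = e/3"
  define P where "P n x = (\<Sum>i\<le>n. a i (n - i) * (fst x - z0) ^ i * (snd x - p0) ^ (n - i))" for n x
  have "0 < \<rho>"
    using \<open>0 < e\<close> by (simp add: \<rho>_def)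
  have near: "dist x (z0, p0) < e" if "dist (fst x) z0 \<le> \<rho>" "dist (snd x) p0 \<le> \<rho>" for x
  proof -
    have "dist x (z0, p0) \<le> dist (fst x) z0 + dist (snd x) p0"
      using norm_Pair_le[of "fst x - z0" "snd x - p0"] by (cases x) (simp add: dist_norm)
    then show ?thesis
      using that \<open>0 < e\<close> by (simp add: \<rho>_def)
  qed
  text \<open>Absolute convergence at the corner point gives a Weierstrass majorant on the polydisc.\<close>
  have "dist (z0 + of_real \<rho>, p0 + of_real \<rho>) (z0, p0) < e"
    using \<open>0 < \<rho>\<close> by (intro near) (simp_all add: dist_norm)
  from series[OF this] have "(\<lambda>(i, j). a i j * of_real \<rho> ^ i * of_real \<rho> ^ j) summable_on UNIV"
    by (auto simp: summable_on_def)
  note majorant = summable_diagonal_majorant[OF this less_imp_le[OF \<open>0 < \<rho>\<close>]]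
  have bound: "norm (P n x) \<le> (\<Sum>i\<le>n. norm (a i (n - i)) * \<rho> ^ i * \<rho> ^ (n - i))"
    if "x \<in> ball z0 \<rho> \<times> ball p0 \<rho>" for n x
    unfolding P_def
  proof (rule order_trans[OF norm_sum sum_mono])
    fix i
    have "norm (fst x - z0) \<le> \<rho>" "norm (snd x - p0) \<le> \<rho>"
      using that by (auto simp: dist_norm norm_minus_commute mem_Times_iff)
    then show "norm (a i (n - i) * (fst x - z0) ^ i * (snd x - p0) ^ (n - i))
        \<le> norm (a i (n - i)) * \<rho> ^ i * \<rho> ^ (n - i)"
      using \<open>0 < \<rho>\<close> unfolding norm_mult norm_power by (intro mult_mono power_mono) auto
  qed
  have "uniform_limit (ball z0 \<rho> \<times> ball p0 \<rho>) (\<lambda>N x. \<Sum>n<N. P n x) (\<lambda>x. \<Sum>n. P n x) sequentially"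
    by (rule Weierstrass_m_test[OF bound majorant])
  also have "?this \<longleftrightarrow> uniform_limit (ball z0 \<rho> \<times> ball p0 \<rho>) (\<lambda>N x. \<Sum>n<N. P n x) F sequentially"
  proof (rule uniform_limit_cong')
    fix x assume "x \<in> ball z0 \<rho> \<times> ball p0 \<rho>"
    then have "dist x (z0, p0) < e"
      by (intro near) (auto simp: dist_commute mem_Times_iff)
    from has_sum_imp_sums[OF has_sum_diagonal[OF series[OF this]]] show "(\<Sum>n. P n x) = F x"
      by (simp add: P_def sums_iff)
  qed simp
  finally show ?thesis
    by (simp add: P_def \<rho>_def)
qed

lemma holomorphic2_on_double_power_series:
  fixes a :: "nat \<Rightarrow> nat \<Rightarrow> complex"
  assumes "0 < e"
    and "\<And>x. dist x (z0, p0) < e \<Longrightarrow>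
      ((\<lambda>(i, j). a i j * (fst x - z0) ^ i * (snd x - p0) ^ j) has_sum F x) UNIV"
  shows "holomorphic2_on F (ball z0 (e/3) \<times> ball p0 (e/3))"
proof (rule holomorphic2_on_uniform_limit[OF open_ball open_ball _ uniform_limit_double_power_series[OF assms]])
  show "holomorphic2_on (\<lambda>x. \<Sum>n<N. \<Sum>i\<le>n. a i (n - i) * (fst x - z0) ^ i * (snd x - p0) ^ (n - i)) S"
    for N S
    unfolding holomorphic2_on_def
    by (auto intro!: continuous_intros holomorphic_on_imp_differentiable_at[of _ UNIV] holomorphic_intros)
qed

lemma holomorphic2_onI_local:
  assumes "\<And>z p. (z, p) \<in> S \<Longrightarrow>
    \<exists>N G. open N \<and> (z, p) \<in> N \<and> holomorphic2_on G N \<and> (\<forall>x\<in>N. F x = G x)"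
  shows "holomorphic2_on F S"
proof -
  have local: "isCont F (z, p) \<and> (\<lambda>z. F (z, p)) field_differentiable at z \<and>
      (\<lambda>p. F (z, p)) field_differentiable at p" if zp: "(z, p) \<in> S" for z p
  proof (intro conjI)
    obtain N G where "open N" "(z, p) \<in> N" and G: "holomorphic2_on G N" and eq: "\<forall>x\<in>N. F x = G x"
      using assms[OF zp] by blast
    then obtain e where "0 < e" "ball (z, p) e \<subseteq> N"
      using open_contains_ball by blast
    have "(x, p) \<in> N" if "dist x z < e" for x
      using that \<open>ball (z, p) e \<subseteq> N\<close> by (auto simp: dist_Pair_Pair dist_commute real_sqrt_abs subset_iff)
    moreover have "(z, y) \<in> N" if "dist y p < e" for y
      using that \<open>ball (z, p) e \<subseteq> N\<close> by (auto simp: dist_Pair_Pair dist_commute real_sqrt_abs subset_iff)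
    ultimately have eq_z: "\<forall>x. dist x z < e \<longrightarrow> G (x, p) = F (x, p)"
      and eq_p: "\<forall>y. dist y p < e \<longrightarrow> G (z, y) = F (z, y)"
      using eq \<open>0 < e\<close> by auto
    have "isCont G (z, p)"
      using G \<open>open N\<close> \<open>(z, p) \<in> N\<close> continuous_on_eq_continuous_at unfolding holomorphic2_on_def by blast
    moreover have "eventually (\<lambda>x. F x = G x) (nhds (z, p))"
      unfolding eventually_nhds using eq \<open>open N\<close> \<open>(z, p) \<in> N\<close> by blast
    ultimately show "isCont F (z, p)"
      by (simp add: isCont_cong)
    have "(\<lambda>z. G (z, p)) field_differentiable at z"
      using G \<open>(z, p) \<in> N\<close> unfolding holomorphic2_on_def by blast
    then show "(\<lambda>z. F (z, p)) field_differentiable at z"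
      using eq_z eq_p by (elim field_differentiable_transform_within[OF \<open>0 < e\<close> UNIV_I, rotated]) auto
    have "(\<lambda>p. G (z, p)) field_differentiable at p"
      using G \<open>(z, p) \<in> N\<close> unfolding holomorphic2_on_def by blast
    then show "(\<lambda>p. F (z, p)) field_differentiable at p"
      using eq_z eq_p by (elim field_differentiable_transform_within[OF \<open>0 < e\<close> UNIV_I, rotated]) auto
  qed
  have "continuous_on S F"
  proof (intro continuous_at_imp_continuous_on ballI)
    fix x assume "x \<in> S"
    then show "isCont F x"
      using local[of "fst x" "snd x"] by simp
  qed
  with local show ?thesis
    unfolding holomorphic2_on_def by blast
qed

lemma analytic2_on_imp_holomorphic2_on:
  assumes "analytic2_on F S"
  shows "holomorphic2_on F S"
proof (rule holomorphic2_onI_local)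
  fix z0 p0 assume "(z0, p0) \<in> S"
  from bspec[OF assms[unfolded analytic2_on_def] this] obtain e a where "0 < e"
    and series: "\<forall>x. dist x (z0, p0) < e \<longrightarrow>
      ((\<lambda>(i, j). a i j * (fst x - fst (z0, p0)) ^ i * (snd x - snd (z0, p0)) ^ j) has_sum F x) UNIV"
    by blast
  have "holomorphic2_on F (ball z0 (e/3) \<times> ball p0 (e/3))"
    using series unfolding fst_conv snd_conv by (blast intro: holomorphic2_on_double_power_series[OF \<open>0 < e\<close>])
  moreover have "open (ball z0 (e/3) \<times> ball p0 (e/3))" "(z0, p0) \<in> ball z0 (e/3) \<times> ball p0 (e/3)"
    using \<open>0 < e\<close> by (auto simp: open_Times)
  ultimately show "\<exists>N G. open N \<and> (z0, p0) \<in> N \<and> holomorphic2_on G N \<and> (\<forall>x\<in>N. F x = G x)"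
    by blast
qed

lemma norm_Taylor_coefficient_le:
  assumes "f holomorphic_on ball \<xi> r" "continuous_on (cball \<xi> r) f" "0 < r"
    and "\<And>x. x \<in> sphere \<xi> r \<Longrightarrow> norm (f x) \<le> B"
  shows "norm ((deriv ^^ n) f \<xi> / fact n) \<le> B / r ^ n"
  using Cauchy_inequality[OF assms(1-3), of B n] assms(4)
  by (simp add: norm_divide dist_norm field_simps)

lemma holomorphic_on_Taylor_coefficient_param:
  assumes "0 < r" and F: "holomorphic2_on F (cball z0 r \<times> ball p0 r)"
  shows "(\<lambda>p. (deriv ^^ i) (\<lambda>z. F (z, p)) z0 / fact i) holomorphic_on ball p0 r"
proof -
  have cauchy: "(deriv ^^ i) (\<lambda>z. F (z, p)) z0 / fact i =
      contour_integral (circlepath z0 r) (\<lambda>\<zeta>. F (\<zeta>, p) / (\<zeta> - z0) ^ Suc i) / (2 * of_real pi * \<i>)"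
    if "p \<in> ball p0 r" for p
  proof -
    have hol: "(\<lambda>z. F (z, p)) holomorphic_on cball z0 r"
      using holomorphic2_on_imp_holomorphic_on_fst[OF F that] .
    have "z0 \<in> ball z0 r"
      using \<open>0 < r\<close> by simp
    from Cauchy_has_contour_integral_higher_derivative_circlepath[OF holomorphic_on_imp_continuous_on[OF hol]
        holomorphic_on_subset[OF hol ball_subset_cball] this, of i]
    show ?thesis
      by (simp add: contour_integral_unique field_simps)
  qed
  have "continuous_on (sphere z0 r \<times> ball p0 r) F"
    using F sphere_cball unfolding holomorphic2_on_def by (blast intro: continuous_on_subset)
  then have "continuous_on (sphere z0 r \<times> ball p0 r) (\<lambda>x. F x / (fst x - z0) ^ Suc i)"
    using \<open>0 < r\<close> by (intro continuous_intros) auto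
  moreover have "(\<lambda>p. F (\<zeta>, p) / (\<zeta> - z0) ^ Suc i) holomorphic_on ball p0 r" if "\<zeta> \<in> sphere z0 r" for \<zeta>
    using holomorphic2_on_imp_holomorphic_on_snd[OF F] that \<open>0 < r\<close> by (auto intro!: holomorphic_intros)
  ultimately have "(\<lambda>p. contour_integral (circlepath z0 r) (\<lambda>\<zeta>. F (\<zeta>, p) / (\<zeta> - z0) ^ Suc i))
      holomorphic_on ball p0 r"
    using \<open>0 < r\<close>
    by (intro holomorphic_on_contour_integral_circlepath) (simp_all add: case_prod_unfold)
  then have "(\<lambda>p. contour_integral (circlepath z0 r) (\<lambda>\<zeta>. F (\<zeta>, p) / (\<zeta> - z0) ^ Suc i)
      / (2 * of_real pi * \<i>)) holomorphic_on ball p0 r"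
    by (intro holomorphic_intros) auto
  then show ?thesis
    by (rule holomorphic_transform) (simp add: cauchy)
qed

lemma has_sum_double_power_series:
  fixes b :: "nat \<Rightarrow> nat \<Rightarrow> complex"
  assumes "0 < r" "0 < t" and bound: "\<And>i j. norm (b i j) \<le> M / r ^ i / t ^ j"
    and "norm x \<le> r / 2" "norm y \<le> t / 2"
    and rows: "\<And>i. (\<lambda>j. b i j * y ^ j) sums c i" and "(\<lambda>i. c i * x ^ i) sums S"
  shows "((\<lambda>(i, j). b i j * x ^ i * y ^ j) has_sum S) UNIV"
proof -
  define T where "T = (\<lambda>(i, j). b i j * x ^ i * y ^ j)"
  define G where "G = (\<lambda>(i, j). M * ((1/2::real) ^ i * (1/2) ^ j))"
  have "0 \<le> M"
    using order_trans[OF norm_ge_zero bound[of 0 0]] by simp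
  have T_le_G: "norm (T p) \<le> G p" for p
  proof (cases p)
    case (Pair i j)
    have "norm (T (i, j)) = norm (b i j) * norm x ^ i * norm y ^ j"
      by (simp add: T_def norm_mult norm_power)
    also have "\<dots> \<le> M / r ^ i / t ^ j * (r / 2) ^ i * (t / 2) ^ j"
      using assms(1-5) \<open>0 \<le> M\<close> by (intro mult_mono power_mono) auto
    also have "\<dots> = G (i, j)"
      using assms(1,2) by (simp add: G_def power_divide field_simps)
    finally show ?thesis
      using Pair by simp
  qed
  have "G summable_on UNIV"
    unfolding G_def using summable_on_cmult_right[OF summable_on_geometric_pairs[of "1/2" "1/2"]]
    by (simp add: case_prod_unfold)
  then have "(\<lambda>p. norm (T p)) summable_on UNIV"
    using T_le_G by (rule Infinite_Sum.abs_summable_on_comparison_test')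
  then have "T summable_on UNIV"
    by (rule abs_summable_summable)
  moreover have "(\<lambda>j. T (i, j)) sums (c i * x ^ i)" for i
    using sums_mult2[OF rows[of i], of "x ^ i"] by (simp add: T_def mult_ac)
  ultimately show ?thesis
    unfolding T_def[symmetric] using \<open>(\<lambda>i. c i * x ^ i) sums S\<close> by (rule has_sum_iterated_sums)
qed

text \<open>Expand F in z with coefficients \<open>c i p\<close>, holomorphic in p by Cauchy's formula, and then
  expand each \<open>c i\<close> in p; Cauchy's estimates make the double series converge absolutely.\<close>

lemma double_power_series_if_holomorphic2_on:
  assumes "0 < r" and F: "holomorphic2_on F (cball z0 r \<times> cball p0 r)"
    and M: "\<And>x. x \<in> cball z0 r \<times> cball p0 r \<Longrightarrow> norm (F x) \<le> M"
  obtains a where "\<And>x. dist x (z0, p0) < r / 4 \<Longrightarrow>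
    ((\<lambda>(i, j). a i j * (fst x - z0) ^ i * (snd x - p0) ^ j) has_sum F x) UNIV"
proof -
  define c where "c i p = (deriv ^^ i) (\<lambda>z. F (z, p)) z0 / fact i" for i p
  define t where "t = r / 2"
  have "0 < t"
    using \<open>0 < r\<close> by (simp add: t_def)
  define b where "b i j = (deriv ^^ j) (c i) p0 / fact j" for i j
  have hol_z: "(\<lambda>z. F (z, p)) holomorphic_on cball z0 r" if "p \<in> cball p0 r" for p
    using holomorphic2_on_imp_holomorphic_on_fst[OF F that] .
  have c_sums: "(\<lambda>i. c i p * (z - z0) ^ i) sums F (z, p)" if "p \<in> cball p0 r" "z \<in> ball z0 r" for p z
    using holomorphic_power_series[OF holomorphic_on_subset[OF hol_z[OF that(1)] ball_subset_cball] that(2)]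
    by (simp add: c_def)
  have c_bound: "norm (c i p) \<le> M / r ^ i" if "p \<in> cball p0 r" for i p
    unfolding c_def using hol_z[OF that] M that \<open>0 < r\<close>
    by (intro norm_Taylor_coefficient_le holomorphic_on_imp_continuous_on) (auto elim: holomorphic_on_subset)
  have c_hol: "c i holomorphic_on ball p0 r" for i
    unfolding c_def using \<open>0 < r\<close> F
    by (intro holomorphic_on_Taylor_coefficient_param) (auto elim: holomorphic2_on_subset)
  have b_sums: "(\<lambda>j. b i j * (p - p0) ^ j) sums c i p" if "p \<in> ball p0 r" for i p
    using holomorphic_power_series[OF c_hol that] by (simp add: b_def)
  have b_bound: "norm (b i j) \<le> M / r ^ i / t ^ j" for i j
  proof -
    have "c i holomorphic_on cball p0 t"
      using c_hol by (rule holomorphic_on_subset) (use \<open>0 < r\<close> in \<open>auto simp: t_def\<close>)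
    then show ?thesis
      unfolding b_def using \<open>0 < t\<close> c_bound \<open>0 < r\<close>
      by (intro norm_Taylor_coefficient_le holomorphic_on_imp_continuous_on)
         (auto simp: t_def elim!: holomorphic_on_subset)
  qed
  have "((\<lambda>(i, j). b i j * (fst x - z0) ^ i * (snd x - p0) ^ j) has_sum F x) UNIV"
    if "dist x (z0, p0) < r / 4" for x
  proof -
    have z: "norm (fst x - z0) < r / 4" and p: "norm (snd x - p0) < r / 4"
      using that dist_fst_le[of x "(z0, p0)"] dist_snd_le[of x "(z0, p0)"] by (auto simp: dist_norm)
    have "norm (fst x - z0) < r" "norm (snd x - p0) < r"
      using z p norm_ge_zero[of "fst x - z0"] norm_ge_zero[of "snd x - p0"] by linarith+
    then have "snd x \<in> ball p0 r" "snd x \<in> cball p0 r" "fst x \<in> ball z0 r"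
      by (simp_all add: dist_norm norm_minus_commute)
    moreover have "norm (fst x - z0) \<le> r / 2" "norm (snd x - p0) \<le> t / 2"
      using z p norm_ge_zero[of "fst x - z0"] unfolding t_def by linarith+
    ultimately have "((\<lambda>(i, j). b i j * (fst x - z0) ^ i * (snd x - p0) ^ j) has_sum F (fst x, snd x)) UNIV"
      by (intro has_sum_double_power_series[OF \<open>0 < r\<close> \<open>0 < t\<close> b_bound, where c="\<lambda>i. c i (snd x)"]
          b_sums c_sums)
    then show ?thesis
      by simp
  qed
  then show ?thesis
    using that by blast
qed

theorem holomorphic2_on_imp_analytic2_on:
  assumes "open S" and F: "holomorphic2_on F S"
  shows "analytic2_on F S"
  unfolding analytic2_on_def
proof
  fix w assume "w \<in> S"
  obtain z0 p0 where w: "w = (z0, p0)"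
    by fastforce
  obtain \<epsilon> where "0 < \<epsilon>" "ball w \<epsilon> \<subseteq> S"
    using \<open>open S\<close> \<open>w \<in> S\<close> open_contains_ball by blast
  define r where "r = \<epsilon> / 3"
  have "0 < r"
    using \<open>0 < \<epsilon>\<close> by (simp add: r_def)
  define K where "K = cball z0 r \<times> cball p0 r"
  have "K \<subseteq> S"
  proof
    fix x assume "x \<in> K"
    then have "dist x w \<le> 2 * r"
      using norm_Pair_le[of "fst x - z0" "snd x - p0"]
      by (cases x) (auto simp: K_def w dist_norm norm_minus_commute)
    then show "x \<in> S"
      using \<open>0 < r\<close> \<open>ball w \<epsilon> \<subseteq> S\<close> by (auto simp: r_def dist_commute)
  qed
  then have F_K: "holomorphic2_on F K"
    using F holomorphic2_on_subset by blast
  have "compact (F ` K)"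
    using F_K unfolding K_def holomorphic2_on_def
    by (intro compact_continuous_image compact_Times compact_cball) auto
  then obtain M where "\<And>x. x \<in> K \<Longrightarrow> norm (F x) \<le> M"
    using compact_imp_bounded bounded_iff by (metis imageI)
  with double_power_series_if_holomorphic2_on[OF \<open>0 < r\<close> F_K[unfolded K_def]]
  obtain a where "\<And>x. dist x (z0, p0) < r / 4 \<Longrightarrow>
      ((\<lambda>(i, j). a i j * (fst x - z0) ^ i * (snd x - p0) ^ j) has_sum F x) UNIV"
    unfolding K_def by blast
  then show "\<exists>e>0. \<exists>a. \<forall>x. dist x w < e \<longrightarrow>
      ((\<lambda>(i, j). a i j * (fst x - fst w) ^ i * (snd x - snd w) ^ j) has_sum F x) UNIV"
    using \<open>0 < r\<close> by (intro exI[of _ "r / 4"] exI[of _ a] conjI allI impI) (simp_all add: w)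
qed

section \<open>Division by a polynomial\<close>

lemma continuous_on_open_eq_at_point:
  fixes f g :: "'a::{perfect_space, t2_space} \<Rightarrow> 'b::t2_space"
  assumes "open A" "continuous_on A f" "continuous_on A g" "w \<in> A"
    and "\<And>z. z \<in> A \<Longrightarrow> z \<noteq> w \<Longrightarrow> f z = g z"
  shows "f w = g w"
proof -
  have "isCont f w" "isCont g w"
    using continuous_on_eq_continuous_at[OF assms(1)] assms(2-4) by blast+
  then have "(f \<longlongrightarrow> f w) (at w)" "(g \<longlongrightarrow> g w) (at w)"
    by (simp_all add: isContD)
  moreover have "eventually (\<lambda>z. f z = g z) (at w)"
    using assms(1,4,5) eventually_at_topological by blast
  ultimately have "(g \<longlongrightarrow> f w) (at w)"
    using Lim_transform_eventually by blast
  with \<open>(g \<longlongrightarrow> g w) (at w)\<close> show ?thesis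
    using tendsto_unique[OF at_neq_bot] by blast
qed

lemma continuous_on_cancel_linear_factor:
  fixes f g :: "complex \<Rightarrow> complex"
  assumes "open A" "continuous_on A f" "continuous_on A g" "w \<in> A"
    and eq: "\<And>z. z \<in> A \<Longrightarrow> (z - w) * f z = (z - w) * g z" and "z \<in> A"
  shows "f z = g z"
proof -
  have off_w: "f z = g z" if "z \<in> A" "z \<noteq> w" for z
    using eq[OF that(1)] that(2) by simp
  then show ?thesis
    using continuous_on_open_eq_at_point[OF assms(1-4) off_w] \<open>z \<in> A\<close> by (cases "z = w") auto
qed

text \<open>Peel off the linear factors of Q one at a time; continuity of H takes care of the
  removed zero.\<close>

lemma poly_eq_continuous_mult_poly_imp_zero:
  fixes D Q :: "complex poly"
  assumes "open A" "Q \<noteq> 0" "\<And>z. poly Q z = 0 \<Longrightarrow> z \<in> A" "D = 0 \<or> degree D < degree Q"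
    and "continuous_on A H" "\<And>z. z \<in> A \<Longrightarrow> poly D z = H z * poly Q z"
  shows "D = 0 \<and> (\<forall>z\<in>A. H z = 0)"
  using assms(2-6)
proof (induction "degree Q" arbitrary: Q D H)
  case 0
  then obtain c where "Q = [:c:]" "c \<noteq> 0"
    by (metis degree_eq_zeroE pCons_eq_0_iff)
  with 0 show ?case
    by simp
next
  case (Suc n)
  obtain w where "poly Q w = 0"
    using fundamental_theorem_of_algebra[of Q] constant_degree[of Q] Suc(2) by auto
  then have "w \<in> A"
    using Suc.prems(2) by blast
  obtain Q' where Q: "Q = [:-w, 1:] * Q'"
    using \<open>poly Q w = 0\<close> poly_eq_0_iff_dvd by (metis dvdE)
  have "poly D w = 0"
    using Suc.prems(5)[OF \<open>w \<in> A\<close>] \<open>poly Q w = 0\<close> by simp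
  then obtain D' where D: "D = [:-w, 1:] * D'"
    using poly_eq_0_iff_dvd by (metis dvdE)
  have "Q' \<noteq> 0"
    using Suc.prems(1) by (auto simp: Q)
  have degree_linear_mult: "degree ([:-w, 1:] * P) = Suc (degree P)" if "P \<noteq> 0" for P :: "complex poly"
    using that by (subst degree_mult_eq) auto
  have "n = degree Q'"
    using Suc(2) degree_linear_mult[OF \<open>Q' \<noteq> 0\<close>] by (simp add: Q)
  have "D' = 0 \<or> degree D' < degree Q'"
    using Suc.prems(3) degree_linear_mult[OF \<open>Q' \<noteq> 0\<close>] degree_linear_mult[of D']
    by (cases "D' = 0") (auto simp: D Q)
  have "poly D' z = H z * poly Q' z" if "z \<in> A" for z
  proof (rule continuous_on_cancel_linear_factor[OF \<open>open A\<close> _ _ \<open>w \<in> A\<close> _ that])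
    show "continuous_on A (poly D')" "continuous_on A (\<lambda>z. H z * poly Q' z)"
      using Suc.prems(4) by (auto intro!: continuous_intros)
    show "(z - w) * poly D' z = (z - w) * (H z * poly Q' z)" if "z \<in> A" for z
      using Suc.prems(5)[OF that] by (simp add: D Q algebra_simps)
  qed
  moreover have "z \<in> A" if "poly Q' z = 0" for z
    using Suc.prems(2)[of z] that by (simp add: Q)
  ultimately have "D' = 0 \<and> (\<forall>z\<in>A. H z = 0)"
    by (intro Suc(1)[OF \<open>n = degree Q'\<close> \<open>Q' \<noteq> 0\<close> _ \<open>D' = 0 \<or> degree D' < degree Q'\<close> Suc.prems(4)])
  then show ?case
    by (simp add: D)
qed

definition poly_difference_quotient_coeff :: "'a::comm_ring_1 poly \<Rightarrow> nat \<Rightarrow> 'a \<Rightarrow> 'a" where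
  "poly_difference_quotient_coeff Q j \<zeta> = (\<Sum>k = Suc j..degree Q. coeff Q k * \<zeta> ^ (k - Suc j))"

lemma poly_diff_eq_difference_quotient:
  "poly Q z - poly Q \<zeta> = (z - \<zeta>) * (\<Sum>j<degree Q. poly_difference_quotient_coeff Q j \<zeta> * z ^ j)"
  unfolding poly_difference_quotient_coeff_def poly_altdef
  by (simp add: sub_polyfun sum_distrib_left sum_distrib_right mult_ac)

lemma continuous_on_poly_difference_quotient_coeff [continuous_intros]:
  fixes Q :: "'a::{comm_ring_1, real_normed_algebra} poly"
  shows "continuous_on A (poly_difference_quotient_coeff Q j)"
  unfolding poly_difference_quotient_coeff_def by (intro continuous_intros)

text \<open>From \<open>1 / (\<zeta> - z) = (Q \<zeta> - Q z) / (Q \<zeta> * (\<zeta> - z)) + Q z / (Q \<zeta> * (\<zeta> - z))\<close>, whose first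
  term is a polynomial in z of degree below that of Q.\<close>

lemma contour_integral_circlepath_split_poly:
  assumes "0 < s" and F: "continuous_on (sphere c s) F"
    and Q: "\<And>\<zeta>. \<zeta> \<in> sphere c s \<Longrightarrow> poly Q \<zeta> \<noteq> 0" and "z \<notin> sphere c s"
  shows "contour_integral (circlepath c s) (\<lambda>\<zeta>. F \<zeta> / (\<zeta> - z)) =
    (\<Sum>j<degree Q. contour_integral (circlepath c s)
        (\<lambda>\<zeta>. F \<zeta> * poly_difference_quotient_coeff Q j \<zeta> / poly Q \<zeta>) * z ^ j) +
    poly Q z * contour_integral (circlepath c s) (\<lambda>\<zeta>. F \<zeta> / (poly Q \<zeta> * (\<zeta> - z)))"
proof -
  let ?B = "poly_difference_quotient_coeff Q"
  have image: "path_image (circlepath c s) = sphere c s"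
    using \<open>0 < s\<close> by (simp add: path_image_circlepath_nonneg)
  have nonzero: "\<zeta> - z \<noteq> 0" if "\<zeta> \<in> sphere c s" for \<zeta>
    using that \<open>z \<notin> sphere c s\<close> by auto
  have integrable: "(\<lambda>\<zeta>. F \<zeta> * ?B j \<zeta> / poly Q \<zeta>) contour_integrable_on circlepath c s"
    "(\<lambda>\<zeta>. F \<zeta> / (poly Q \<zeta> * (\<zeta> - z))) contour_integrable_on circlepath c s" for j
    using \<open>0 < s\<close> F Q nonzero
    by (auto intro!: contour_integrable_continuous_circlepath continuous_intros)
  have "((\<lambda>\<zeta>. (\<Sum>j<degree Q. F \<zeta> * ?B j \<zeta> / poly Q \<zeta> * z ^ j) +
          poly Q z * (F \<zeta> / (poly Q \<zeta> * (\<zeta> - z)))) has_contour_integral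
      ((\<Sum>j<degree Q. contour_integral (circlepath c s) (\<lambda>\<zeta>. F \<zeta> * ?B j \<zeta> / poly Q \<zeta>) * z ^ j) +
        poly Q z * contour_integral (circlepath c s) (\<lambda>\<zeta>. F \<zeta> / (poly Q \<zeta> * (\<zeta> - z)))))
      (circlepath c s)"
    by (intro has_contour_integral_add has_contour_integral_sum has_contour_integral_rmul
        has_contour_integral_lmul has_contour_integral_integral integrable) auto
  moreover have "(\<Sum>j<degree Q. F \<zeta> * ?B j \<zeta> / poly Q \<zeta> * z ^ j) +
      poly Q z * (F \<zeta> / (poly Q \<zeta> * (\<zeta> - z))) = F \<zeta> / (\<zeta> - z)"
    if "\<zeta> \<in> sphere c s" for \<zeta>
  proof -
    have "(\<Sum>j<degree Q. ?B j \<zeta> * z ^ j) = (poly Q \<zeta> - poly Q z) / (\<zeta> - z)"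
      using poly_diff_eq_difference_quotient[of Q z \<zeta>] nonzero[OF that] by (simp add: field_simps)
    moreover have "(\<Sum>j<degree Q. F \<zeta> * ?B j \<zeta> / poly Q \<zeta> * z ^ j) =
        F \<zeta> / poly Q \<zeta> * (\<Sum>j<degree Q. ?B j \<zeta> * z ^ j)"
      by (simp add: sum_distrib_left mult_ac)
    ultimately have "(\<Sum>j<degree Q. F \<zeta> * ?B j \<zeta> / poly Q \<zeta> * z ^ j) =
        F \<zeta> / poly Q \<zeta> * ((poly Q \<zeta> - poly Q z) / (\<zeta> - z))"
      by simp
    then show ?thesis
      using Q[OF that] nonzero[OF that] by (simp add: field_simps)
  qed
  ultimately show ?thesis
    using image by (intro contour_integral_unique) (auto elim!: has_contour_integral_eq)
qed

text \<open>Cauchy-integral formula for the quotient in Weierstrass division by U, taken over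
  circles around the zeros of U.\<close>

definition division_quotient ::
    "(complex \<Rightarrow> complex) \<Rightarrow> (complex \<Rightarrow> complex) \<Rightarrow> complex set \<Rightarrow> real \<Rightarrow> complex \<Rightarrow> complex" where
  "division_quotient F U C s z =
     (\<Sum>c\<in>C. contour_integral (circlepath c s) (\<lambda>\<zeta>. F \<zeta> / (U \<zeta> * (\<zeta> - z)))) / (2 * of_real pi * \<i>)"

lemma holomorphic_on_division_quotient:
  assumes "0 < s" and F: "continuous_on (\<Union>c\<in>C. sphere c s) F"
    and U: "continuous_on (\<Union>c\<in>C. sphere c s) U" "\<And>\<zeta>. \<zeta> \<in> (\<Union>c\<in>C. sphere c s) \<Longrightarrow> U \<zeta> \<noteq> 0"
  shows "division_quotient F U C s holomorphic_on - (\<Union>c\<in>C. sphere c s)"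
proof -
  have "(\<lambda>z. contour_integral (circlepath c s) (\<lambda>\<zeta>. F \<zeta> / (U \<zeta> * (\<zeta> - z)))) holomorphic_on - sphere c s"
    if c: "c \<in> C" for c
  proof (rule holomorphic_on_contour_integral_circlepath[OF _ \<open>0 < s\<close>])
    have sphere_c: "sphere c s \<subseteq> (\<Union>c\<in>C. sphere c s)"
      using c by blast
    have "continuous_on (sphere c s \<times> - sphere c s) (\<lambda>x. F (fst x))"
      "continuous_on (sphere c s \<times> - sphere c s) (\<lambda>x. U (fst x) * (fst x - snd x))"
      using sphere_c
      by (intro continuous_intros continuous_on_compose2[OF F] continuous_on_compose2[OF U(1)]; force)+
    moreover have "U (fst x) * (fst x - snd x) \<noteq> 0" if "x \<in> sphere c s \<times> - sphere c s" for x
    proof -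
      have "fst x \<in> sphere c s" "snd x \<notin> sphere c s"
        using that by (auto simp: mem_Times_iff)
      with U(2)[OF subsetD[OF sphere_c]] show ?thesis
        by auto
    qed
    ultimately have "continuous_on (sphere c s \<times> - sphere c s) (\<lambda>x. F (fst x) / (U (fst x) * (fst x - snd x)))"
      by (intro continuous_on_divide) auto
    then show "continuous_on (sphere c s \<times> - sphere c s) (\<lambda>(\<zeta>, z). F \<zeta> / (U \<zeta> * (\<zeta> - z)))"
      by (simp add: case_prod_unfold)
    show "(\<lambda>z. F \<zeta> / (U \<zeta> * (\<zeta> - z))) holomorphic_on - sphere c s" if "\<zeta> \<in> sphere c s" for \<zeta>
      using U(2)[of \<zeta>] c that by (auto intro!: holomorphic_intros)
  qed (simp add: open_Compl)
  then have "(\<lambda>z. contour_integral (circlepath c s) (\<lambda>\<zeta>. F \<zeta> / (U \<zeta> * (\<zeta> - z))))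
      holomorphic_on - (\<Union>c\<in>C. sphere c s)" if "c \<in> C" for c
    by (rule holomorphic_on_subset[OF _ Compl_anti_mono]) (use that in blast)+
  then show ?thesis
    unfolding division_quotient_def by (intro holomorphic_intros) auto
qed

lemma continuous_on_circle_integrand:
  assumes f: "holomorphic2_on f (S \<times> W)" and u: "holomorphic2_on u (S \<times> W)" and "sphere c s \<subseteq> S"
    and u_nonzero: "\<And>\<zeta> p. \<zeta> \<in> sphere c s \<Longrightarrow> p \<in> W \<Longrightarrow> u (\<zeta>, p) \<noteq> 0"
    and g: "continuous_on V g" and h: "continuous_on V h" "h ` V \<subseteq> W"
    and not_on_sphere: "\<And>x. x \<in> V \<Longrightarrow> g x \<notin> sphere c s"
  shows "continuous_on (sphere c s \<times> V) (\<lambda>(\<zeta>, x). f (\<zeta>, h x) / (u (\<zeta>, h x) * (\<zeta> - g x)))"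
proof -
  have "(\<lambda>x. (fst x, h (snd x))) ` (sphere c s \<times> V) \<subseteq> S \<times> W"
    using \<open>sphere c s \<subseteq> S\<close> h(2) by force
  moreover have "u (fst x, h (snd x)) * (fst x - g (snd x)) \<noteq> 0" if "x \<in> sphere c s \<times> V" for x
    using that u_nonzero h(2) not_on_sphere by (force simp: mem_Times_iff)
  moreover have cont_f: "continuous_on (S \<times> W) f" and cont_u: "continuous_on (S \<times> W) u"
    using f u by (simp_all add: holomorphic2_on_def)
  ultimately have "continuous_on (sphere c s \<times> V)
      (\<lambda>x. f (fst x, h (snd x)) / (u (fst x, h (snd x)) * (fst x - g (snd x))))"
    by (intro continuous_on_divide continuous_intros continuous_on_compose2[OF cont_f]
        continuous_on_compose2[OF cont_u] continuous_on_compose2[OF g] continuous_on_compose2[OF h(1)]) auto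
  then show ?thesis
    by (simp add: case_prod_unfold)
qed

lemma holomorphic2_on_contour_integral_circlepath:
  assumes "0 < s" "open W" and f: "holomorphic2_on f (S \<times> W)" and u: "holomorphic2_on u (S \<times> W)"
    and "sphere c s \<subseteq> S" and u_nonzero: "\<And>\<zeta> p. \<zeta> \<in> sphere c s \<Longrightarrow> p \<in> W \<Longrightarrow> u (\<zeta>, p) \<noteq> 0"
  shows "holomorphic2_on (\<lambda>(z, p). contour_integral (circlepath c s) (\<lambda>\<zeta>. f (\<zeta>, p) / (u (\<zeta>, p) * (\<zeta> - z))))
    ((- sphere c s) \<times> W)"
proof -
  define I where "I z p = contour_integral (circlepath c s) (\<lambda>\<zeta>. f (\<zeta>, p) / (u (\<zeta>, p) * (\<zeta> - z)))" for z p
  note integrand = continuous_on_circle_integrand[OF f u \<open>sphere c s \<subseteq> S\<close> u_nonzero]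
  have "continuous_on ((- sphere c s) \<times> W) (\<lambda>x. I (fst x) (snd x))"
    unfolding I_def using \<open>0 < s\<close>
    by (intro continuous_on_contour_integral_circlepath integrand) (auto intro!: continuous_intros)
  moreover have hol_z: "(\<lambda>z. I z p) holomorphic_on - sphere c s" if "p \<in> W" for p
    unfolding I_def
  proof (rule holomorphic_on_contour_integral_circlepath[OF _ \<open>0 < s\<close>])
    show "continuous_on (sphere c s \<times> - sphere c s) (\<lambda>(\<zeta>, z). f (\<zeta>, p) / (u (\<zeta>, p) * (\<zeta> - z)))"
      using integrand[of "- sphere c s" "\<lambda>z. z" "\<lambda>_. p"] that by (auto intro!: continuous_intros)
    show "(\<lambda>z. f (\<zeta>, p) / (u (\<zeta>, p) * (\<zeta> - z))) holomorphic_on - sphere c s" if "\<zeta> \<in> sphere c s" for \<zeta>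
      using u_nonzero[OF that \<open>p \<in> W\<close>] that by (auto intro!: holomorphic_intros)
  qed (simp add: open_Compl)
  moreover have hol_p: "(\<lambda>p. I z p) holomorphic_on W" if "z \<in> - sphere c s" for z
    unfolding I_def
  proof (rule holomorphic_on_contour_integral_circlepath[OF \<open>open W\<close> \<open>0 < s\<close>])
    show "continuous_on (sphere c s \<times> W) (\<lambda>(\<zeta>, p). f (\<zeta>, p) / (u (\<zeta>, p) * (\<zeta> - z)))"
      using integrand[of W "\<lambda>_. z" "\<lambda>p. p"] that by (auto intro!: continuous_intros)
    show "(\<lambda>p. f (\<zeta>, p) / (u (\<zeta>, p) * (\<zeta> - z))) holomorphic_on W" if "\<zeta> \<in> sphere c s" for \<zeta>
      using that \<open>z \<in> - sphere c s\<close> \<open>sphere c s \<subseteq> S\<close> u_nonzero[OF that]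
        holomorphic2_on_imp_holomorphic_on_snd[OF f] holomorphic2_on_imp_holomorphic_on_snd[OF u]
      by (auto intro!: holomorphic_intros)
  qed
  moreover have "(\<lambda>z. I z p) field_differentiable at z \<and> (\<lambda>p. I z p) field_differentiable at p"
    if "(z, p) \<in> (- sphere c s) \<times> W" for z p
  proof -
    have "z \<in> - sphere c s" "p \<in> W" "open (- sphere c s)"
      using that by (auto simp: open_Compl)
    then show ?thesis
      using hol_z hol_p \<open>open W\<close> by (blast intro: holomorphic_on_imp_differentiable_at)
  qed
  ultimately have "holomorphic2_on (\<lambda>x. I (fst x) (snd x)) ((- sphere c s) \<times> W)"
    unfolding holomorphic2_on_def by auto
  then show ?thesis
    by (simp add: I_def case_prod_unfold)
qed

lemma holomorphic2_on_division_quotient: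
  assumes "0 < s" "open W" and f: "holomorphic2_on f (S \<times> W)" and u: "holomorphic2_on u (S \<times> W)"
    and spheres: "(\<Union>c\<in>C. sphere c s) \<subseteq> S"
    and u_nonzero: "\<And>\<zeta> p. \<zeta> \<in> (\<Union>c\<in>C. sphere c s) \<Longrightarrow> p \<in> W \<Longrightarrow> u (\<zeta>, p) \<noteq> 0"
  shows "holomorphic2_on (\<lambda>(z, p). division_quotient (\<lambda>\<zeta>. f (\<zeta>, p)) (\<lambda>\<zeta>. u (\<zeta>, p)) C s z)
    ((- (\<Union>c\<in>C. sphere c s)) \<times> W)"
proof -
  have "holomorphic2_on (\<lambda>(z, p). contour_integral (circlepath c s) (\<lambda>\<zeta>. f (\<zeta>, p) / (u (\<zeta>, p) * (\<zeta> - z))))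
      ((- (\<Union>c\<in>C. sphere c s)) \<times> W)" if "c \<in> C" for c
  proof (rule holomorphic2_on_subset[OF holomorphic2_on_contour_integral_circlepath[OF assms(1-4)]])
    show "sphere c s \<subseteq> S" "\<And>\<zeta> p. \<zeta> \<in> sphere c s \<Longrightarrow> p \<in> W \<Longrightarrow> u (\<zeta>, p) \<noteq> 0"
      using that spheres u_nonzero by blast+
    show "(- (\<Union>c\<in>C. sphere c s)) \<times> W \<subseteq> (- sphere c s) \<times> W"
      using that by blast
  qed
  then show ?thesis
    unfolding division_quotient_def case_prod_unfold
    by (intro holomorphic2_on_divide holomorphic2_on_sum holomorphic2_on_const) auto
qed

lemma holomorphic_on_glue:
  assumes "open A" "open B" "f holomorphic_on A" "g holomorphic_on B"
    and "\<And>z. z \<in> A \<Longrightarrow> z \<in> B \<Longrightarrow> f z = g z"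
  shows "(\<lambda>z. if z \<in> A then f z else g z) holomorphic_on A \<union> B"
proof (rule holomorphic_on_Un[OF _ _ assms(1,2)])
  show "(\<lambda>z. if z \<in> A then f z else g z) holomorphic_on A"
    using assms(3) by (rule holomorphic_transform) simp
  show "(\<lambda>z. if z \<in> A then f z else g z) holomorphic_on B"
    using assms(4) by (rule holomorphic_transform) (simp add: assms(5))
qed

locale disjoint_circles =
  fixes Om C :: "complex set" and s :: real
  assumes open_Om: "open Om" and finite_C: "finite C" and radius_pos: "0 < s"
    and cball_subset: "\<And>c. c \<in> C \<Longrightarrow> cball c s \<subseteq> Om"
    and separated: "\<And>c c'. c \<in> C \<Longrightarrow> c' \<in> C \<Longrightarrow> c \<noteq> c' \<Longrightarrow> 2 * s < dist c c'"
begin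

lemma outside_other_circles:
  assumes "c \<in> C" "c' \<in> C" "c \<noteq> c'" "dist z c \<le> s"
  shows "s < dist z c'"
  using separated[OF assms(1-3)] dist_triangle[of c c' z] assms(4) by (simp add: dist_commute)

lemma spheres_subset: "(\<Union>c\<in>C. sphere c s) \<subseteq> Om"
  using cball_subset sphere_cball by blast

lemma not_on_spheres_if_inside:
  assumes "c \<in> C" "dist z c < s"
  shows "z \<notin> (\<Union>c\<in>C. sphere c s)"
  using assms outside_other_circles[OF assms(1) _ _ less_imp_le[OF assms(2)]] by (fastforce simp: dist_commute)

lemma contour_integral_outside_circle:
  assumes "c \<in> C" "F holomorphic_on Om" "s < dist z c"
  shows "contour_integral (circlepath c s) (\<lambda>\<zeta>. F \<zeta> / (\<zeta> - z)) = 0"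
proof -
  have image: "path_image (circlepath c s) = sphere c s"
    using radius_pos by (simp add: path_image_circlepath_nonneg)
  have "z \<notin> cball c s"
    using assms(3) by (simp add: dist_commute)
  have "((\<lambda>\<zeta>. F \<zeta> / (\<zeta> - z)) has_contour_integral 0) (circlepath c s)"
  proof (rule Cauchy_theorem_global[where S = "Om - {z}"])
    show "open (Om - {z})"
      using open_Om by (simp add: open_delete)
    show "(\<lambda>\<zeta>. F \<zeta> / (\<zeta> - z)) holomorphic_on Om - {z}"
      using assms(2) by (auto intro!: holomorphic_intros elim: holomorphic_on_subset)
    show "path_image (circlepath c s) \<subseteq> Om - {z}"
      using image cball_subset[OF assms(1)] \<open>z \<notin> cball c s\<close> sphere_cball by blast
    show "winding_number (circlepath c s) w = 0" if "w \<notin> Om - {z}" for w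
    proof (rule winding_number_zero_outside[of _ "cball c s"])
      show "w \<notin> cball c s"
        using that cball_subset[OF assms(1)] \<open>z \<notin> cball c s\<close> by blast
    qed (use image sphere_cball in auto)
  qed auto
  then show ?thesis
    by (rule contour_integral_unique)
qed

lemma sum_contour_integrals_inside:
  assumes "c \<in> C" "F holomorphic_on Om" "dist z c < s"
  shows "(\<Sum>c\<in>C. contour_integral (circlepath c s) (\<lambda>\<zeta>. F \<zeta> / (\<zeta> - z))) = 2 * of_real pi * \<i> * F z"
proof -
  have "(\<Sum>c'\<in>C - {c}. contour_integral (circlepath c' s) (\<lambda>\<zeta>. F \<zeta> / (\<zeta> - z))) = 0"
    using assms outside_other_circles[OF assms(1)]
    by (intro sum.neutral ballI contour_integral_outside_circle) auto
  moreover have "contour_integral (circlepath c s) (\<lambda>\<zeta>. F \<zeta> / (\<zeta> - z)) = 2 * of_real pi * \<i> * F z"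
  proof (rule contour_integral_unique, rule Cauchy_integral_circlepath)
    show "continuous_on (cball c s) F" "F holomorphic_on ball c s"
      using assms(2) cball_subset[OF assms(1)] ball_subset_cball
      by (meson holomorphic_on_imp_continuous_on holomorphic_on_subset order_trans)+
    show "norm (z - c) < s"
      using assms(3) by (simp add: dist_norm)
  qed
  ultimately show ?thesis
    using finite_C assms(1) by (simp add: sum.remove)
qed

lemma sum_contour_integrals_outside:
  assumes "F holomorphic_on Om" "\<And>c. c \<in> C \<Longrightarrow> s < dist z c"
  shows "(\<Sum>c\<in>C. contour_integral (circlepath c s) (\<lambda>\<zeta>. F \<zeta> / (\<zeta> - z))) = 0"
  using assms by (intro sum.neutral ballI contour_integral_outside_circle)

lemma sum_contour_integrals_split_poly:
  assumes F: "F holomorphic_on Om" and Q: "\<And>\<zeta>. \<zeta> \<in> (\<Union>c\<in>C. sphere c s) \<Longrightarrow> poly Q \<zeta> \<noteq> 0"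
  obtains R where "R = 0 \<or> degree R < degree Q"
    "\<And>z. z \<notin> (\<Union>c\<in>C. sphere c s) \<Longrightarrow>
      (\<Sum>c\<in>C. contour_integral (circlepath c s) (\<lambda>\<zeta>. F \<zeta> / (\<zeta> - z))) / (2 * of_real pi * \<i>) =
      poly R z + poly Q z * division_quotient F (poly Q) C s z"
proof -
  define \<kappa> :: complex where "\<kappa> = 2 * of_real pi * \<i>"
  define I where "I c j = contour_integral (circlepath c s)
      (\<lambda>\<zeta>. F \<zeta> * poly_difference_quotient_coeff Q j \<zeta> / poly Q \<zeta>)" for c j
  define J where "J c z = contour_integral (circlepath c s) (\<lambda>\<zeta>. F \<zeta> / (poly Q \<zeta> * (\<zeta> - z)))" for c z
  define R where "R = (\<Sum>j<degree Q. monom ((\<Sum>c\<in>C. I c j) / \<kappa>) j)"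
  have "R = 0 \<or> degree R < degree Q"
  proof (cases "degree Q = 0")
    case False
    have "degree R \<le> degree Q - 1"
      unfolding R_def by (rule degree_sum_le) (auto intro: order_trans[OF degree_monom_le])
    with False show ?thesis
      by linarith
  qed (simp add: R_def)
  moreover have "(\<Sum>c\<in>C. contour_integral (circlepath c s) (\<lambda>\<zeta>. F \<zeta> / (\<zeta> - z))) / \<kappa> =
      poly R z + poly Q z * division_quotient F (poly Q) C s z"
    if z: "z \<notin> (\<Union>c\<in>C. sphere c s)" for z
  proof -
    have "contour_integral (circlepath c s) (\<lambda>\<zeta>. F \<zeta> / (\<zeta> - z)) =
        (\<Sum>j<degree Q. I c j * z ^ j) + poly Q z * J c z" if "c \<in> C" for c
      unfolding I_def J_def
    proof (rule contour_integral_circlepath_split_poly[OF radius_pos])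
      show "continuous_on (sphere c s) F"
        using F spheres_subset that by (blast intro: holomorphic_on_imp_continuous_on holomorphic_on_subset)
    qed (use that z Q in auto)
    then have "(\<Sum>c\<in>C. contour_integral (circlepath c s) (\<lambda>\<zeta>. F \<zeta> / (\<zeta> - z))) =
        (\<Sum>c\<in>C. \<Sum>j<degree Q. I c j * z ^ j) + poly Q z * (\<Sum>c\<in>C. J c z)"
      by (simp add: sum.distrib sum_distrib_left)
    also have "(\<Sum>c\<in>C. \<Sum>j<degree Q. I c j * z ^ j) = (\<Sum>j<degree Q. (\<Sum>c\<in>C. I c j) * z ^ j)"
      by (simp add: sum.swap[of _ C] sum_distrib_right)
    finally have "(\<Sum>c\<in>C. contour_integral (circlepath c s) (\<lambda>\<zeta>. F \<zeta> / (\<zeta> - z))) / \<kappa> =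
        (\<Sum>j<degree Q. (\<Sum>c\<in>C. I c j) * z ^ j) / \<kappa> + poly Q z * ((\<Sum>c\<in>C. J c z) / \<kappa>)"
      by (simp add: add_divide_distrib)
    moreover have "(\<Sum>j<degree Q. (\<Sum>c\<in>C. I c j) * z ^ j) / \<kappa> = poly R z"
      by (simp add: R_def poly_sum poly_monom sum_divide_distrib[symmetric] field_simps)
    moreover have "(\<Sum>c\<in>C. J c z) / \<kappa> = division_quotient F (poly Q) C s z"
      by (simp add: J_def \<kappa>_def division_quotient_def)
    ultimately show ?thesis
      by simp
  qed
  ultimately show ?thesis
    using that unfolding \<kappa>_def by blast
qed

lemma remainder_identities:
  assumes F: "F holomorphic_on Om" and Q: "\<And>\<zeta>. \<zeta> \<in> (\<Union>c\<in>C. sphere c s) \<Longrightarrow> poly Q \<zeta> \<noteq> 0"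
  obtains R where "R = 0 \<or> degree R < degree Q"
    "\<And>z c. c \<in> C \<Longrightarrow> dist z c < s \<Longrightarrow> F z = poly R z + poly Q z * division_quotient F (poly Q) C s z"
    "\<And>z. (\<And>c. c \<in> C \<Longrightarrow> s < dist z c) \<Longrightarrow> poly R z = - (poly Q z * division_quotient F (poly Q) C s z)"
proof -
  obtain R where R: "R = 0 \<or> degree R < degree Q"
    and split: "\<And>z. z \<notin> (\<Union>c\<in>C. sphere c s) \<Longrightarrow>
      (\<Sum>c\<in>C. contour_integral (circlepath c s) (\<lambda>\<zeta>. F \<zeta> / (\<zeta> - z))) / (2 * of_real pi * \<i>) =
      poly R z + poly Q z * division_quotient F (poly Q) C s z"
    using sum_contour_integrals_split_poly[OF F Q] by blast
  have inside: "F z = poly R z + poly Q z * division_quotient F (poly Q) C s z"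
    if "c \<in> C" "dist z c < s" for z c
    using split[OF not_on_spheres_if_inside[OF that]] sum_contour_integrals_inside[OF that(1) F that(2)]
    by simp
  have outside: "poly R z = - (poly Q z * division_quotient F (poly Q) C s z)"
    if "\<And>c. c \<in> C \<Longrightarrow> s < dist z c" for z
  proof -
    have "z \<notin> (\<Union>c\<in>C. sphere c s)"
      using that by (auto simp: dist_commute less_le)
    then show ?thesis
      using split[of z] sum_contour_integrals_outside[OF F that] by (simp add: eq_neg_iff_add_eq_0)
  qed
  show ?thesis
    by (rule that[OF R inside outside])
qed

lemma dist_spheres_ge:
  assumes "\<zeta> \<in> (\<Union>c\<in>C. sphere c s)" "c' \<in> C"
  shows "s \<le> dist \<zeta> c'"
proof -
  obtain c where c: "c \<in> C" "dist \<zeta> c = s"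
    using assms(1) by (auto simp: dist_commute)
  show ?thesis
  proof (cases "c' = c")
    case False
    have "s < dist \<zeta> c'"
      by (rule outside_other_circles[OF c(1) assms(2)]) (use False c in auto)
    then show ?thesis
      by simp
  qed (use c in simp)
qed

text \<open>The quotient is the division integral inside the circles and \<open>(F - R) / Q\<close> away from the
  zeros of Q; the two agree where both are defined.\<close>

lemma division_by_poly:
  assumes F: "F holomorphic_on Om"
    and Q: "\<And>z. z \<in> Om \<Longrightarrow> (\<And>c. c \<in> C \<Longrightarrow> s \<le> dist z c) \<Longrightarrow> poly Q z \<noteq> 0"
  obtains R h where "R = 0 \<or> degree R < degree Q" "h holomorphic_on Om"
    "\<And>z. z \<in> Om \<Longrightarrow> F z = h z * poly Q z + poly R z"
    "\<And>z c. z \<in> Om \<Longrightarrow> c \<in> C \<Longrightarrow> dist z c < s \<Longrightarrow> h z = division_quotient F (poly Q) C s z"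
    "\<And>z. z \<in> Om \<Longrightarrow> (\<And>c. c \<in> C \<Longrightarrow> s < dist z c) \<Longrightarrow> poly R z = - (poly Q z * division_quotient F (poly Q) C s z)"
proof -
  let ?G = "division_quotient F (poly Q) C s"
  define Z where "Z = (\<Union>c\<in>C. sphere c s)"
  have Q_spheres: "poly Q \<zeta> \<noteq> 0" if "\<zeta> \<in> Z" for \<zeta>
  proof (rule Q)
    show "\<zeta> \<in> Om"
      using that spheres_subset unfolding Z_def by blast
    show "s \<le> dist \<zeta> c" if "c \<in> C" for c
      using dist_spheres_ge \<open>\<zeta> \<in> Z\<close> that unfolding Z_def by blast
  qed
  obtain R where R: "R = 0 \<or> degree R < degree Q"
    and inside: "\<And>z c. c \<in> C \<Longrightarrow> dist z c < s \<Longrightarrow> F z = poly R z + poly Q z * ?G z"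
    and outside: "\<And>z. (\<And>c. c \<in> C \<Longrightarrow> s < dist z c) \<Longrightarrow> poly R z = - (poly Q z * ?G z)"
    using remainder_identities[OF F Q_spheres[unfolded Z_def]] by blast
  define B where "B = Om \<inter> (\<Union>c\<in>C. ball c s)"
  define h where "h z = (if z \<in> B then ?G z else (F z - poly R z) / poly Q z)" for z
  have "h holomorphic_on B \<union> (Om - {z. poly Q z = 0})"
    unfolding h_def
  proof (rule holomorphic_on_glue)
    have "continuous_on Z F" "continuous_on Z (poly Q)"
      using F spheres_subset unfolding Z_def
      by (auto intro: holomorphic_on_imp_continuous_on holomorphic_on_subset continuous_intros)
    then have "?G holomorphic_on - Z"
      unfolding Z_def using radius_pos Q_spheres by (intro holomorphic_on_division_quotient) (auto simp: Z_def)
    moreover have "B \<subseteq> - Z"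
      using not_on_spheres_if_inside by (auto simp: B_def Z_def dist_commute)
    ultimately show "?G holomorphic_on B"
      by (rule holomorphic_on_subset)
    show "(\<lambda>z. (F z - poly R z) / poly Q z) holomorphic_on Om - {z. poly Q z = 0}"
      using F by (auto intro!: holomorphic_intros elim: holomorphic_on_subset)
    show "?G z = (F z - poly R z) / poly Q z" if "z \<in> B" "z \<in> Om - {z. poly Q z = 0}" for z
      using inside that by (auto simp: B_def dist_commute)
    show "open B" "open (Om - {z. poly Q z = 0})"
      using open_Om by (auto simp: B_def intro!: open_Diff closed_Collect_eq continuous_intros)
  qed
  moreover have "B \<union> (Om - {z. poly Q z = 0}) = Om"
    using Q by (force simp: B_def dist_commute)
  ultimately have "h holomorphic_on Om"
    by simp
  moreover have "F z = h z * poly Q z + poly R z" if "z \<in> Om" for z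
  proof (cases "z \<in> B")
    case True
    then show ?thesis
      using inside by (auto simp: h_def B_def dist_commute)
  next
    case False
    then have "poly Q z \<noteq> 0"
      using Q that by (force simp: B_def dist_commute)
    with False show ?thesis
      by (simp add: h_def)
  qed
  moreover have "h z = ?G z" if "z \<in> Om" "c \<in> C" "dist z c < s" for z c
    using that by (auto simp: h_def B_def dist_commute)
  ultimately show ?thesis
    using that R outside by blast
qed

end

section \<open>Zeros of Weierstrass polynomials\<close>

lemma monic_poly_nonzero_if_small_coeffs:
  fixes a :: "nat \<Rightarrow> complex"
  assumes "0 < \<rho>" "\<rho> \<le> norm w" and small: "\<And>i. i < K \<Longrightarrow> norm (a i) \<le> min 1 \<rho> ^ K / (K + 1)"
  shows "w ^ K + (\<Sum>i<K. a i * w ^ i) \<noteq> 0"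
proof -
  define \<mu> where "\<mu> = min 1 \<rho>"
  have \<mu>: "0 < \<mu>" "\<mu> \<le> 1" "\<mu> \<le> norm w" "0 < norm w"
    using assms(1,2) by (auto simp: \<mu>_def)
  have "norm (a i * w ^ i) \<le> norm w ^ K / (K + 1)" if "i < K" for i
  proof -
    have "\<mu> ^ K \<le> \<mu> ^ (K - i)"
      using \<mu> by (intro power_decreasing) auto
    also have "\<dots> \<le> norm w ^ (K - i)"
      using \<mu> by (intro power_mono) auto
    finally have "norm w ^ i * \<mu> ^ K \<le> norm w ^ i * norm w ^ (K - i)"
      by (intro mult_left_mono) auto
    also have "\<dots> = norm w ^ K"
      using that by (simp add: power_add[symmetric])
    finally have le: "norm w ^ i * \<mu> ^ K \<le> norm w ^ K" .
    have "norm (a i * w ^ i) \<le> \<mu> ^ K / (K + 1) * norm w ^ i"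
      unfolding norm_mult norm_power \<mu>_def using small[OF that] by (intro mult_right_mono) auto
    also have "\<dots> = norm w ^ i * \<mu> ^ K / (K + 1)"
      by simp
    also have "\<dots> \<le> norm w ^ K / (K + 1)"
      using le by (intro divide_right_mono) auto
    finally show ?thesis .
  qed
  then have "norm (\<Sum>i<K. a i * w ^ i) \<le> K * (norm w ^ K / (K + 1))"
    using sum_norm_le[of "{..<K}" "\<lambda>i. a i * w ^ i" "\<lambda>_. norm w ^ K / (K + 1)"] by simp
  also have "\<dots> < norm (w ^ K)"
    using \<mu> by (simp add: norm_power field_simps)
  finally show ?thesis
    by (metis add_eq_0_iff norm_minus_cancel order_less_irrefl)
qed

lemma weierstrass_poly_at_eventually_nonzero:
  assumes "weierstrass_poly_at v z0 p0" "0 < \<rho>"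
  shows "eventually (\<lambda>p. \<forall>z. \<rho> \<le> dist z z0 \<longrightarrow> v (z, p) \<noteq> 0) (nhds p0)"
proof -
  obtain K \<alpha> where \<alpha>: "\<forall>j<K. \<alpha> j analytic_on {0} \<and> \<alpha> j 0 = 0"
    and v: "\<forall>z p. v (z + z0, p + p0) = z ^ K + (\<Sum>j<K. \<alpha> j p * z ^ j)"
    using assms(1) unfolding weierstrass_poly_at_def weierstrass_poly_def by auto
  define \<eta> where "\<eta> = min 1 \<rho> ^ K / (K + 1)"
  have "0 < \<eta>"
    using assms(2) by (simp add: \<eta>_def)
  have "eventually (\<lambda>q. norm (\<alpha> j q) < \<eta>) (at 0)" if "j < K" for j
  proof -
    have "(\<alpha> j \<longlongrightarrow> 0) (at 0)"
      using \<alpha> that analytic_at_imp_isCont[of "\<alpha> j" 0] by (auto simp: isCont_def analytic_on_def)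
    from tendstoD[OF this \<open>0 < \<eta>\<close>] show ?thesis
      by (simp add: dist_norm)
  qed
  then have "eventually (\<lambda>q. \<forall>j\<in>{..<K}. norm (\<alpha> j q) < \<eta>) (at 0)"
    by (intro eventually_ball_finite) auto
  then have "eventually (\<lambda>q. \<forall>j\<in>{..<K}. norm (\<alpha> j q) < \<eta>) (nhds 0)"
    using \<alpha> \<open>0 < \<eta>\<close> by (simp add: eventually_nhds_conv_at)
  then obtain d where "0 < d" and small: "\<And>q j. dist q 0 < d \<Longrightarrow> j < K \<Longrightarrow> norm (\<alpha> j q) < \<eta>"
    unfolding eventually_nhds_metric by auto
  show ?thesis
    unfolding eventually_nhds_metric
  proof (intro exI[of _ d] conjI allI impI)
    fix p z assume "dist p p0 < d" "\<rho> \<le> dist z z0"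
    then have "(z - z0) ^ K + (\<Sum>j<K. \<alpha> j (p - p0) * (z - z0) ^ j) \<noteq> 0"
      using small[of "p - p0"] assms(2)
      by (intro monic_poly_nonzero_if_small_coeffs) (auto simp: \<eta>_def dist_norm less_imp_le)
    then show "v (z, p) \<noteq> 0"
      using v[rule_format, of "z - z0" "p - p0"] by simp
  qed (rule \<open>0 < d\<close>)
qed

lemma weierstrass_product_zeros_cluster:
  fixes us :: "nat \<Rightarrow> complex \<times> complex \<Rightarrow> complex" and zs :: "nat \<Rightarrow> complex"
  assumes "\<forall>j<k. weierstrass_poly_at (us j) (zs j) p0" "0 < e"
    and product: "\<forall>p\<in>ball p0 e. \<forall>z. u (z, p) = (\<Prod>j<k. us j (z, p))" and "0 < \<rho>"
  shows "eventually (\<lambda>p. \<forall>z. (\<forall>c\<in>zs ` {..<k}. \<rho> \<le> dist z c) \<longrightarrow> u (z, p) \<noteq> 0) (nhds p0)"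
proof -
  have "eventually (\<lambda>p. p \<in> ball p0 e) (nhds p0)"
    using \<open>0 < e\<close> by (intro eventually_nhds_in_open) auto
  moreover have "eventually (\<lambda>p. \<forall>j\<in>{..<k}. \<forall>z. \<rho> \<le> dist z (zs j) \<longrightarrow> us j (z, p) \<noteq> 0) (nhds p0)"
    using assms(1,4) by (intro eventually_ball_finite ballI weierstrass_poly_at_eventually_nonzero) auto
  ultimately show ?thesis
  proof eventually_elim
    case (elim p)
    then show ?case
      using product by auto
  qed
qed

section \<open>Division depending analytically on a parameter\<close>

locale parametric_division =
  fixes Om P :: "complex set" and f u :: "complex \<times> complex \<Rightarrow> complex" and m :: nat
  assumes open_Om: "open Om" and open_P: "open P"
    and f: "holomorphic2_on f (Om \<times> P)" and u: "holomorphic2_on u (Om \<times> P)"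
    and u_poly: "\<And>p. p \<in> P \<Longrightarrow> \<exists>Q. degree Q = m \<and> (\<forall>z. u (z, p) = poly Q z)"
    and u_zeros_cluster: "\<And>p0. p0 \<in> P \<Longrightarrow> \<exists>C. finite C \<and> C \<subseteq> Om \<and>
      (\<forall>\<rho>>0. eventually (\<lambda>p. \<forall>z. (\<forall>c\<in>C. \<rho> \<le> dist z c) \<longrightarrow> u (z, p) \<noteq> 0) (nhds p0))"
begin

definition is_division :: "complex \<Rightarrow> complex poly \<Rightarrow> (complex \<Rightarrow> complex) \<Rightarrow> bool" where
  "is_division p R h \<longleftrightarrow> (R = 0 \<or> degree R < m) \<and> h holomorphic_on Om \<and>
     (\<forall>z\<in>Om. f (z, p) = h z * u (z, p) + poly R z)"

lemma u_slice_poly: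
  assumes "p \<in> P"
  obtains Q where "degree Q = m" "\<And>z. u (z, p) = poly Q z" "Q \<noteq> 0" "\<And>z. poly Q z = 0 \<Longrightarrow> z \<in> Om"
proof -
  obtain Q where Q: "degree Q = m" "\<And>z. u (z, p) = poly Q z"
    using u_poly[OF assms] by blast
  obtain C where "finite C" "C \<subseteq> Om"
    and cluster: "\<And>\<rho>. 0 < \<rho> \<Longrightarrow> eventually (\<lambda>q. \<forall>z. (\<forall>c\<in>C. \<rho> \<le> dist z c) \<longrightarrow> u (z, q) \<noteq> 0) (nhds p)"
    using u_zeros_cluster[OF assms] by blast
  have zeros: "z \<in> C" if "poly Q z = 0" for z
  proof (rule ccontr)
    assume "z \<notin> C"
    obtain \<rho> where "0 < \<rho>" "\<forall>c\<in>C. \<rho> \<le> dist z c"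
    proof (cases "C = {}")
      case False
      then have "0 < infdist z C"
        using \<open>z \<notin> C\<close> \<open>finite C\<close> by (simp add: infdist_pos_not_in_closed finite_imp_closed)
      with that show ?thesis
        using infdist_le by blast
    qed (use that[of 1] in simp)
    then have "u (z, p) \<noteq> 0"
      using eventually_nhds_x_imp_x[OF cluster] by blast
    with \<open>poly Q z = 0\<close> show False
      by (simp add: Q(2))
  qed
  have "Q \<noteq> 0"
  proof
    assume "Q = 0"
    then have "UNIV \<subseteq> C"
      using zeros by auto
    with \<open>finite C\<close> show False
      using infinite_UNIV_char_0 finite_subset by blast
  qed
  with Q zeros \<open>C \<subseteq> Om\<close> show ?thesis
    using that by blast
qed

lemma is_division_unique:
  assumes "p \<in> P" "is_division p R1 h1" "is_division p R2 h2"
  shows "R1 = R2 \<and> (\<forall>z\<in>Om. h1 z = h2 z)"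
proof -
  obtain Q where Q: "degree Q = m" "\<And>z. u (z, p) = poly Q z" "Q \<noteq> 0" "\<And>z. poly Q z = 0 \<Longrightarrow> z \<in> Om"
    using u_slice_poly[OF assms(1)] by blast
  have "R2 - R1 = 0 \<and> (\<forall>z\<in>Om. h1 z - h2 z = 0)"
  proof (rule poly_eq_continuous_mult_poly_imp_zero[OF open_Om Q(3,4)])
    show "R2 - R1 = 0 \<or> degree (R2 - R1) < degree Q"
      using assms(2,3) degree_diff_le_max[of R2 R1] by (auto simp: is_division_def Q(1))
    show "continuous_on Om (\<lambda>z. h1 z - h2 z)"
      using assms(2,3) unfolding is_division_def
      by (intro continuous_intros holomorphic_on_imp_continuous_on) auto
    show "poly (R2 - R1) z = (h1 z - h2 z) * poly Q z" if "z \<in> Om" for z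
      using assms(2,3) that by (auto simp: is_division_def Q(2)[symmetric] algebra_simps)
  qed
  then show ?thesis
    by simp
qed

end

text \<open>Circles of any radius between \<open>\<rho>\<close> and \<open>3 * \<rho>\<close> around the points of C are disjoint, lie in
  Om and enclose all zeros of \<open>u (-, p)\<close> for p near p0.\<close>

locale parametric_division_near = parametric_division +
  fixes p0 :: complex and C :: "complex set" and \<rho> \<delta> :: real
  assumes finite_C: "finite C" and \<rho>_pos: "0 < \<rho>" and \<delta>_pos: "0 < \<delta>"
    and cballs: "\<And>c. c \<in> C \<Longrightarrow> cball c (3 * \<rho>) \<subseteq> Om"
    and separated: "\<And>c c'. c \<in> C \<Longrightarrow> c' \<in> C \<Longrightarrow> c \<noteq> c' \<Longrightarrow> 6 * \<rho> < dist c c'"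
    and ball_P: "ball p0 \<delta> \<subseteq> P"
    and u_nonzero: "\<And>p z. p \<in> ball p0 \<delta> \<Longrightarrow> (\<And>c. c \<in> C \<Longrightarrow> \<rho> \<le> dist z c) \<Longrightarrow> u (z, p) \<noteq> 0"

context parametric_division
begin

lemma exists_near:
  assumes "p0 \<in> P"
  shows "\<exists>C \<rho> \<delta>. parametric_division_near Om P f u m p0 C \<rho> \<delta>"
proof -
  obtain C where "finite C" "C \<subseteq> Om"
    and cluster: "\<And>\<rho>. 0 < \<rho> \<Longrightarrow> eventually (\<lambda>p. \<forall>z. (\<forall>c\<in>C. \<rho> \<le> dist z c) \<longrightarrow> u (z, p) \<noteq> 0) (nhds p0)"
    using u_zeros_cluster[OF assms] by blast
  have "eventually (\<lambda>\<rho>. cball c (3 * \<rho>) \<subseteq> Om) (at_right 0)" if c: "c \<in> C" for c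
  proof -
    obtain r where "0 < r" "cball c r \<subseteq> Om"
      using \<open>C \<subseteq> Om\<close> c open_Om open_contains_cball by blast
    then show ?thesis
      unfolding eventually_at_right_field by (intro exI[of _ "r / 3"]) auto
  qed
  moreover have "eventually (\<lambda>\<rho>. 6 * \<rho> < dist c c') (at_right 0)" if "c \<noteq> c'" for c c'
    unfolding eventually_at_right_field using that by (intro exI[of _ "dist c c' / 6"]) auto
  ultimately have "eventually (\<lambda>\<rho>. (\<forall>c\<in>C. cball c (3 * \<rho>) \<subseteq> Om) \<and>
      (\<forall>x\<in>C \<times> C. fst x \<noteq> snd x \<longrightarrow> 6 * \<rho> < dist (fst x) (snd x))) (at_right 0)"
    using \<open>finite C\<close> by (intro eventually_conj eventually_ball_finite ballI) auto
  then obtain b where "0 < b" and b: "\<And>\<rho>. 0 < \<rho> \<Longrightarrow> \<rho> < b \<Longrightarrow> (\<forall>c\<in>C. cball c (3 * \<rho>) \<subseteq> Om) \<and>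
      (\<forall>x\<in>C \<times> C. fst x \<noteq> snd x \<longrightarrow> 6 * \<rho> < dist (fst x) (snd x))"
    unfolding eventually_at_right_field by blast
  define \<rho> where "\<rho> = b / 2"
  have "0 < \<rho>" and \<rho>: "\<And>c. c \<in> C \<Longrightarrow> cball c (3 * \<rho>) \<subseteq> Om"
    "\<And>c c'. c \<in> C \<Longrightarrow> c' \<in> C \<Longrightarrow> c \<noteq> c' \<Longrightarrow> 6 * \<rho> < dist c c'"
    using \<open>0 < b\<close> b[of \<rho>] by (auto simp: \<rho>_def)
  obtain d where "0 < d" and d: "\<And>p z. dist p p0 < d \<Longrightarrow> (\<forall>c\<in>C. \<rho> \<le> dist z c) \<Longrightarrow> u (z, p) \<noteq> 0"
    using cluster[OF \<open>0 < \<rho>\<close>] unfolding eventually_nhds_metric by blast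
  obtain d' where "0 < d'" "ball p0 d' \<subseteq> P"
    using open_P assms open_contains_ball by blast
  have "parametric_division_near_axioms Om P u p0 C \<rho> (min d d')"
  proof
    show "ball p0 (min d d') \<subseteq> P"
      using \<open>ball p0 d' \<subseteq> P\<close> by auto
    show "u (z, p) \<noteq> 0" if "p \<in> ball p0 (min d d')" "\<And>c. c \<in> C \<Longrightarrow> \<rho> \<le> dist z c" for p z
      using that d by (simp add: dist_commute)
  qed (use \<open>finite C\<close> \<open>0 < \<rho>\<close> \<open>0 < d\<close> \<open>0 < d'\<close> \<rho> in auto)
  then have "parametric_division_near Om P f u m p0 C \<rho> (min d d')"
    by (intro parametric_division_near.intro parametric_division.intro open_Om open_P f u u_poly u_zeros_cluster)
  then show ?thesis
    by blast
qed

end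

context parametric_division_near
begin

lemma disjoint_circles_of_radius: "\<rho> \<le> s \<Longrightarrow> s \<le> 3 * \<rho> \<Longrightarrow> disjoint_circles Om C s"
proof unfold_locales
  fix c c' assume "s \<le> 3 * \<rho>" "c \<in> C" "c' \<in> C" "c \<noteq> c'"
  then show "2 * s < dist c c'"
    using separated[of c c'] by linarith
qed (use open_Om finite_C \<rho>_pos cballs in \<open>auto simp: subset_eq\<close>)

definition near_quotient :: "real \<Rightarrow> complex \<times> complex \<Rightarrow> complex" where
  "near_quotient s = (\<lambda>(z, p). division_quotient (\<lambda>\<zeta>. f (\<zeta>, p)) (\<lambda>\<zeta>. u (\<zeta>, p)) C s z)"

lemma u_nonzero_near_spheres:
  assumes "\<rho> \<le> s" "s \<le> 3 * \<rho>" "\<zeta> \<in> (\<Union>c\<in>C. sphere c s)" "p \<in> ball p0 \<delta>"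
  shows "u (\<zeta>, p) \<noteq> 0"
proof (rule u_nonzero[OF assms(4)])
  interpret disjoint_circles Om C s
    using disjoint_circles_of_radius[OF assms(1,2)] .
  show "\<rho> \<le> dist \<zeta> c" if "c \<in> C" for c
    using dist_spheres_ge[OF assms(3) that] assms(1) by linarith
qed

lemma holomorphic2_on_near_quotient:
  assumes "\<rho> \<le> s" "s \<le> 3 * \<rho>"
  shows "holomorphic2_on (near_quotient s) ((- (\<Union>c\<in>C. sphere c s)) \<times> ball p0 \<delta>)"
  unfolding near_quotient_def
proof (rule holomorphic2_on_division_quotient[OF _ open_ball])
  interpret disjoint_circles Om C s
    using disjoint_circles_of_radius[OF assms] .
  show "0 < s"
    by (rule radius_pos)
  show "holomorphic2_on f (Om \<times> ball p0 \<delta>)" "holomorphic2_on u (Om \<times> ball p0 \<delta>)"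
    using f u ball_P by (auto elim!: holomorphic2_on_subset)
  show "(\<Union>c\<in>C. sphere c s) \<subseteq> Om"
    by (rule spheres_subset)
qed (use u_nonzero_near_spheres[OF assms] in blast)

lemma exists_division_near:
  assumes "\<rho> \<le> s" "s \<le> 3 * \<rho>" "p \<in> ball p0 \<delta>"
  obtains R h where "is_division p R h"
    "\<And>z c. z \<in> Om \<Longrightarrow> c \<in> C \<Longrightarrow> dist z c < s \<Longrightarrow> h z = near_quotient s (z, p)"
    "\<And>z. z \<in> Om \<Longrightarrow> (\<And>c. c \<in> C \<Longrightarrow> s < dist z c) \<Longrightarrow> poly R z = - (u (z, p) * near_quotient s (z, p))"
proof -
  interpret disjoint_circles Om C s
    using disjoint_circles_of_radius[OF assms(1,2)] .
  have "p \<in> P"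
    using assms(3) ball_P by blast
  obtain Q where "degree Q = m" and u_Q: "\<And>z. u (z, p) = poly Q z"
    using u_slice_poly[OF \<open>p \<in> P\<close>] by blast
  have quotient: "near_quotient s (z, p) = division_quotient (\<lambda>z. f (z, p)) (poly Q) C s z" for z
    by (simp add: near_quotient_def u_Q)
  have hol: "(\<lambda>z. f (z, p)) holomorphic_on Om"
    using holomorphic2_on_imp_holomorphic_on_fst[OF f \<open>p \<in> P\<close>] .
  have nonzero: "poly Q z \<noteq> 0" if "z \<in> Om" "\<And>c. c \<in> C \<Longrightarrow> s \<le> dist z c" for z
    unfolding u_Q[symmetric] using assms(1) that(2) by (intro u_nonzero[OF assms(3)]) (meson order_trans)
  show ?thesis
  proof (rule division_by_poly[OF hol nonzero])
    fix R h
    assume "R = 0 \<or> degree R < degree Q" "h holomorphic_on Om"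
      "\<And>z. z \<in> Om \<Longrightarrow> f (z, p) = h z * poly Q z + poly R z"
      "\<And>z c. z \<in> Om \<Longrightarrow> c \<in> C \<Longrightarrow> dist z c < s \<Longrightarrow> h z = division_quotient (\<lambda>z. f (z, p)) (poly Q) C s z"
      "\<And>z. z \<in> Om \<Longrightarrow> (\<And>c. c \<in> C \<Longrightarrow> s < dist z c) \<Longrightarrow>
        poly R z = - (poly Q z * division_quotient (\<lambda>z. f (z, p)) (poly Q) C s z)"
    then show ?thesis
      using that[of R h] \<open>degree Q = m\<close> by (simp add: is_division_def u_Q quotient)
  qed
qed

end

context parametric_division
begin

definition division :: "complex \<Rightarrow> complex poly \<times> (complex \<Rightarrow> complex)" where
  "division p = (SOME x. is_division p (fst x) (snd x))"

definition div_quotient :: "complex \<times> complex \<Rightarrow> complex" where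
  "div_quotient = (\<lambda>(z, p). snd (division p) z)"

definition div_remainder :: "complex \<times> complex \<Rightarrow> complex" where
  "div_remainder = (\<lambda>(z, p). poly (fst (division p)) z)"

lemma is_division_division:
  assumes "p \<in> P"
  shows "is_division p (fst (division p)) (snd (division p))"
proof -
  obtain C \<rho> \<delta> where "parametric_division_near Om P f u m p C \<rho> \<delta>"
    using exists_near[OF assms] by blast
  then interpret parametric_division_near Om P f u m p C \<rho> \<delta> .
  have "\<rho> \<le> 2 * \<rho>" "2 * \<rho> \<le> 3 * \<rho>" "p \<in> ball p \<delta>"
    using \<rho>_pos \<delta>_pos by auto
  then obtain R h where "is_division p R h"
    by (rule exists_division_near) blast
  then have "is_division p (fst (R, h)) (snd (R, h))"
    by simp
  then show ?thesis
    unfolding division_def by (rule someI)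
qed

end

context parametric_division_near
begin

lemma division_near:
  assumes "\<rho> \<le> s" "s \<le> 3 * \<rho>" "p \<in> ball p0 \<delta>" "z \<in> Om"
  shows "c \<in> C \<Longrightarrow> dist z c < s \<Longrightarrow> div_quotient (z, p) = near_quotient s (z, p)"
    and "c \<in> C \<Longrightarrow> dist z c < s \<Longrightarrow> div_remainder (z, p) = f (z, p) - u (z, p) * near_quotient s (z, p)"
    and "(\<And>c. c \<in> C \<Longrightarrow> s < dist z c) \<Longrightarrow> div_remainder (z, p) = - (u (z, p) * near_quotient s (z, p))"
proof -
  have "p \<in> P"
    using assms(3) ball_P by blast
  obtain R h where "is_division p R h"
    and inside: "\<And>z c. z \<in> Om \<Longrightarrow> c \<in> C \<Longrightarrow> dist z c < s \<Longrightarrow> h z = near_quotient s (z, p)"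
    and outside: "\<And>z. z \<in> Om \<Longrightarrow> (\<And>c. c \<in> C \<Longrightarrow> s < dist z c) \<Longrightarrow> poly R z = - (u (z, p) * near_quotient s (z, p))"
    using exists_division_near[OF assms(1-3)] by blast
  with is_division_unique[OF \<open>p \<in> P\<close> is_division_division[OF \<open>p \<in> P\<close>]]
  have R: "fst (division p) = R" and h: "snd (division p) z = h z"
    using assms(4) by auto
  show "div_quotient (z, p) = near_quotient s (z, p)" if "c \<in> C" "dist z c < s"
    using inside[OF assms(4) that] h by (simp add: div_quotient_def)
  show "div_remainder (z, p) = f (z, p) - u (z, p) * near_quotient s (z, p)" if "c \<in> C" "dist z c < s"
    using inside[OF assms(4) that] h \<open>is_division p R h\<close> assms(4)
    by (simp add: div_remainder_def R is_division_def)
  show "div_remainder (z, p) = - (u (z, p) * near_quotient s (z, p))" if "\<And>c. c \<in> C \<Longrightarrow> s < dist z c"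
    using outside[OF assms(4) that] by (simp add: div_remainder_def R)
qed

lemma open_inside_circles: "open ((Om \<inter> (\<Union>c\<in>C. ball c s)) \<times> ball p0 \<delta>)"
  using open_Om by (intro open_Times open_Int open_UN) auto

lemma open_outside_circles: "open ((Om - (\<Union>c\<in>C. cball c s)) \<times> ball p0 \<delta>)"
  using open_Om finite_C by (intro open_Times open_Diff closed_UN) auto

lemma inside_circles_subset:
  assumes "\<rho> \<le> s" "s \<le> 3 * \<rho>"
  shows "(Om \<inter> (\<Union>c\<in>C. ball c s)) \<times> ball p0 \<delta> \<subseteq> (- (\<Union>c\<in>C. sphere c s)) \<times> ball p0 \<delta> \<inter> Om \<times> P"
proof -
  interpret disjoint_circles Om C s
    using disjoint_circles_of_radius[OF assms] .
  show ?thesis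
    using not_on_spheres_if_inside ball_P by (fastforce simp: dist_commute)
qed

lemma outside_circles_subset:
  "(Om - (\<Union>c\<in>C. cball c s)) \<times> ball p0 \<delta> \<subseteq> (- (\<Union>c\<in>C. sphere c s)) \<times> ball p0 \<delta> \<inter> Om \<times> P"
  using ball_P by auto

lemma div_remainder_near:
  assumes "z1 \<in> Om"
  shows "\<exists>N G. open N \<and> (z1, p0) \<in> N \<and> holomorphic2_on G N \<and> (\<forall>x\<in>N. div_remainder x = G x)"
proof (cases "\<exists>c\<in>C. dist z1 c < 3 * \<rho>")
  case True
  define N where "N = (Om \<inter> (\<Union>c\<in>C. ball c (3 * \<rho>))) \<times> ball p0 \<delta>"
  have sub: "N \<subseteq> (- (\<Union>c\<in>C. sphere c (3 * \<rho>))) \<times> ball p0 \<delta> \<inter> Om \<times> P"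
    unfolding N_def using \<rho>_pos by (intro inside_circles_subset) auto
  have "holomorphic2_on (\<lambda>x. f x - u x * near_quotient (3 * \<rho>) x) N"
    using sub \<rho>_pos
    by (intro holomorphic2_on_diff holomorphic2_on_mult holomorphic2_on_subset[OF f]
        holomorphic2_on_subset[OF u] holomorphic2_on_subset[OF holomorphic2_on_near_quotient]) auto
  moreover have "div_remainder x = f x - u x * near_quotient (3 * \<rho>) x" if "x \<in> N" for x
    using that \<rho>_pos division_near(2)[of "3 * \<rho>" "snd x" "fst x"]
    by (force simp: N_def dist_commute)
  moreover have "open N" "(z1, p0) \<in> N"
    using open_inside_circles True assms \<delta>_pos by (auto simp: N_def dist_commute)
  ultimately show ?thesis
    by blast
next
  case False
  define N where "N = (Om - (\<Union>c\<in>C. cball c (2 * \<rho>))) \<times> ball p0 \<delta>"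
  have "holomorphic2_on (\<lambda>x. - (u x * near_quotient (2 * \<rho>) x)) N"
    using outside_circles_subset \<rho>_pos
    by (intro holomorphic2_on_uminus holomorphic2_on_mult holomorphic2_on_subset[OF u]
        holomorphic2_on_subset[OF holomorphic2_on_near_quotient]) (auto simp: N_def)
  moreover have "div_remainder x = - (u x * near_quotient (2 * \<rho>) x)" if "x \<in> N" for x
    using that \<rho>_pos division_near(3)[of "2 * \<rho>" "snd x" "fst x"]
    by (force simp: N_def dist_commute)
  moreover have "open N" "(z1, p0) \<in> N"
    using open_outside_circles False assms \<delta>_pos \<rho>_pos by (force simp: N_def dist_commute)+
  ultimately show ?thesis
    by blast
qed

end

context parametric_division
begin

lemma holomorphic2_on_div_remainder: "holomorphic2_on div_remainder (Om \<times> P)"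
proof (rule holomorphic2_onI_local)
  fix z p assume "(z, p) \<in> Om \<times> P"
  then obtain C \<rho> \<delta> where "parametric_division_near Om P f u m p C \<rho> \<delta>"
    using exists_near by blast
  then interpret parametric_division_near Om P f u m p C \<rho> \<delta> .
  show "\<exists>N G. open N \<and> (z, p) \<in> N \<and> holomorphic2_on G N \<and> (\<forall>x\<in>N. div_remainder x = G x)"
    using \<open>(z, p) \<in> Om \<times> P\<close> div_remainder_near by blast
qed

end

context parametric_division_near
begin

lemma div_quotient_near:
  assumes "z1 \<in> Om"
  shows "\<exists>N G. open N \<and> (z1, p0) \<in> N \<and> holomorphic2_on G N \<and> (\<forall>x\<in>N. div_quotient x = G x)"
proof (cases "\<exists>c\<in>C. dist z1 c < 2 * \<rho>")
  case True
  define N where "N = (Om \<inter> (\<Union>c\<in>C. ball c (2 * \<rho>))) \<times> ball p0 \<delta>"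
  have sub: "N \<subseteq> (- (\<Union>c\<in>C. sphere c (2 * \<rho>))) \<times> ball p0 \<delta> \<inter> Om \<times> P"
    unfolding N_def using \<rho>_pos by (intro inside_circles_subset) auto
  have "holomorphic2_on (near_quotient (2 * \<rho>)) N"
    using sub \<rho>_pos by (intro holomorphic2_on_subset[OF holomorphic2_on_near_quotient]) auto
  moreover have "div_quotient x = near_quotient (2 * \<rho>) x" if "x \<in> N" for x
    using that \<rho>_pos division_near(1)[of "2 * \<rho>" "snd x" "fst x"]
    by (force simp: N_def dist_commute)
  moreover have "open N" "(z1, p0) \<in> N"
    using open_inside_circles True assms \<delta>_pos by (auto simp: N_def dist_commute)
  ultimately show ?thesis
    by blast
next
  case False
  define N where "N = (Om - (\<Union>c\<in>C. cball c \<rho>)) \<times> ball p0 \<delta>"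
  have u_N: "u x \<noteq> 0" if "x \<in> N" for x
    using that u_nonzero[of "snd x" "fst x"] by (force simp: N_def dist_commute)
  have "N \<subseteq> Om \<times> P"
    using ball_P by (auto simp: N_def)
  then have "holomorphic2_on (\<lambda>x. (f x - div_remainder x) / u x) N"
    using u_N
    by (intro holomorphic2_on_divide holomorphic2_on_diff holomorphic2_on_subset[OF f]
        holomorphic2_on_subset[OF u] holomorphic2_on_subset[OF holomorphic2_on_div_remainder])
  moreover have "div_quotient x = (f x - div_remainder x) / u x" if "x \<in> N" for x
  proof -
    have "fst x \<in> Om" "snd x \<in> P"
      using that \<open>N \<subseteq> Om \<times> P\<close> by auto
    with is_division_division[of "snd x"] u_N[OF that] show ?thesis
      by (auto simp: is_division_def div_quotient_def div_remainder_def field_simps case_prod_unfold)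
  qed
  moreover have "open N" "(z1, p0) \<in> N"
    using open_outside_circles False assms \<delta>_pos \<rho>_pos by (force simp: N_def dist_commute)+
  ultimately show ?thesis
    by blast
qed

end

context parametric_division
begin

lemma holomorphic2_on_div_quotient: "holomorphic2_on div_quotient (Om \<times> P)"
proof (rule holomorphic2_onI_local)
  fix z p assume "(z, p) \<in> Om \<times> P"
  then obtain C \<rho> \<delta> where "parametric_division_near Om P f u m p C \<rho> \<delta>"
    using exists_near by blast
  then interpret parametric_division_near Om P f u m p C \<rho> \<delta> .
  show "\<exists>N G. open N \<and> (z, p) \<in> N \<and> holomorphic2_on G N \<and> (\<forall>x\<in>N. div_quotient x = G x)"
    using \<open>(z, p) \<in> Om \<times> P\<close> div_quotient_near by blast
qed

lemma div_remainder_poly: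
  assumes "p \<in> P"
  shows "\<exists>q. (q = 0 \<or> degree q < m) \<and> (\<forall>z\<in>Om. div_remainder (z, p) = poly q z)"
  using is_division_division[OF assms] by (auto simp: is_division_def div_remainder_def)

lemma div_quotient_div_remainder:
  assumes "z \<in> Om" "p \<in> P"
  shows "f (z, p) = div_quotient (z, p) * u (z, p) + div_remainder (z, p)"
  using is_division_division[OF assms(2)] assms(1)
  by (simp add: is_division_def div_quotient_def div_remainder_def)

lemma division_unique:
  assumes g: "\<And>p. p \<in> P \<Longrightarrow> (\<lambda>z. g (z, p)) holomorphic_on Om"
    and r: "\<And>p. p \<in> P \<Longrightarrow> \<exists>q. (q = 0 \<or> degree q < m) \<and> (\<forall>z\<in>Om. r (z, p) = poly q z)"
    and eq: "\<And>z p. z \<in> Om \<Longrightarrow> p \<in> P \<Longrightarrow> f (z, p) = g (z, p) * u (z, p) + r (z, p)"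
    and "z \<in> Om" "p \<in> P"
  shows "g (z, p) = div_quotient (z, p) \<and> r (z, p) = div_remainder (z, p)"
proof -
  obtain q where q: "q = 0 \<or> degree q < m" "\<And>z. z \<in> Om \<Longrightarrow> r (z, p) = poly q z"
    using r[OF \<open>p \<in> P\<close>] by blast
  have "is_division p q (\<lambda>z. g (z, p))"
    using q g[OF \<open>p \<in> P\<close>] eq[OF _ \<open>p \<in> P\<close>] by (simp add: is_division_def)
  from is_division_unique[OF \<open>p \<in> P\<close> this is_division_division[OF \<open>p \<in> P\<close>]]
  show ?thesis
    using q(2) \<open>z \<in> Om\<close> by (simp add: div_quotient_def div_remainder_def)
qed

theorem unique_division:
  shows "\<exists>g r. (analytic2_on g (Om \<times> P) \<and> analytic2_on r (Om \<times> P) \<and>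
              (\<forall>p\<in>P. \<exists>q :: complex poly. (q = 0 \<or> degree q < m) \<and> (\<forall>z\<in>Om. r (z, p) = poly q z)) \<and>
              (\<forall>z\<in>Om. \<forall>p\<in>P. f (z, p) = g (z, p) * u (z, p) + r (z, p))) \<and>
         (\<forall>g' r'. analytic2_on g' (Om \<times> P) \<and> analytic2_on r' (Om \<times> P) \<and>
              (\<forall>p\<in>P. \<exists>q :: complex poly. (q = 0 \<or> degree q < m) \<and> (\<forall>z\<in>Om. r' (z, p) = poly q z)) \<and>
              (\<forall>z\<in>Om. \<forall>p\<in>P. f (z, p) = g' (z, p) * u (z, p) + r' (z, p))
            \<longrightarrow> (\<forall>x\<in>Om \<times> P. g' x = g x \<and> r' x = r x))"
proof -
  have "open (Om \<times> P)"
    using open_Om open_P by (rule open_Times)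
  then have analytic: "analytic2_on div_quotient (Om \<times> P)" "analytic2_on div_remainder (Om \<times> P)"
    by (simp_all add: holomorphic2_on_imp_analytic2_on holomorphic2_on_div_quotient holomorphic2_on_div_remainder)
  have unique: "g x = div_quotient x \<and> r x = div_remainder x"
    if "analytic2_on g (Om \<times> P)"
      and "\<forall>p\<in>P. \<exists>q. (q = 0 \<or> degree q < m) \<and> (\<forall>z\<in>Om. r (z, p) = poly q z)"
      and "\<forall>z\<in>Om. \<forall>p\<in>P. f (z, p) = g (z, p) * u (z, p) + r (z, p)" and "x \<in> Om \<times> P" for g r x
    using that division_unique[of g r "fst x" "snd x"]
      holomorphic2_on_imp_holomorphic_on_fst[OF analytic2_on_imp_holomorphic2_on[OF that(1)]]
    by (auto simp: mem_Times_iff)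
  show ?thesis
  proof (rule exI[of _ div_quotient], rule exI[of _ div_remainder], intro conjI allI impI ballI analytic)
    show "\<exists>q. (q = 0 \<or> degree q < m) \<and> (\<forall>z\<in>Om. div_remainder (z, p) = poly q z)" if "p \<in> P" for p
      using that by (rule div_remainder_poly)
    show "f (z, p) = div_quotient (z, p) * u (z, p) + div_remainder (z, p)" if "z \<in> Om" "p \<in> P" for z p
      using that by (rule div_quotient_div_remainder)
  qed (use unique in blast)+
qed

end

theorem lemma4:
  fixes Om Pi_set :: "complex set" and f u :: "complex \<times> complex \<Rightarrow> complex" and m :: nat
  assumes "open Om" "connected Om" "Om \<noteq> {}"
    and "open Pi_set" "connected Pi_set" "Pi_set \<noteq> {}"
    and "analytic2_on f (Om \<times> Pi_set)" "analytic2_on u (Om \<times> Pi_set)"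
    and "\<forall>p\<in>Pi_set. \<exists>q :: complex poly. degree q = m \<and> (\<forall>z. u (z, p) = poly q z)"
    and "\<forall>pi0\<in>Pi_set. \<exists>k::nat. \<exists>zs :: nat \<Rightarrow> complex. \<exists>us :: nat \<Rightarrow> complex \<times> complex \<Rightarrow> complex.
           (\<forall>j<k. zs j \<in> Om \<and> analytic2_on (us j) {(zs j, pi0)} \<and> weierstrass_poly_at (us j) (zs j) pi0) \<and>
           (\<exists>e>0. \<forall>p\<in>ball pi0 e. \<forall>z. u (z, p) = (\<Prod>j<k. us j (z, p)))"
  shows "\<exists>g r. (analytic2_on g (Om \<times> Pi_set) \<and> analytic2_on r (Om \<times> Pi_set) \<and>
              (\<forall>p\<in>Pi_set. \<exists>q :: complex poly. (q = 0 \<or> degree q < m) \<and> (\<forall>z\<in>Om. r (z, p) = poly q z)) \<and>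
              (\<forall>z\<in>Om. \<forall>p\<in>Pi_set. f (z, p) = g (z, p) * u (z, p) + r (z, p))) \<and>
         (\<forall>g' r'. analytic2_on g' (Om \<times> Pi_set) \<and> analytic2_on r' (Om \<times> Pi_set) \<and>
              (\<forall>p\<in>Pi_set. \<exists>q :: complex poly. (q = 0 \<or> degree q < m) \<and> (\<forall>z\<in>Om. r' (z, p) = poly q z)) \<and>
              (\<forall>z\<in>Om. \<forall>p\<in>Pi_set. f (z, p) = g' (z, p) * u (z, p) + r' (z, p))
            \<longrightarrow> (\<forall>x\<in>Om \<times> Pi_set. g' x = g x \<and> r' x = r x))"
proof -
  interpret parametric_division Om Pi_set f u m
  proof
    show "holomorphic2_on f (Om \<times> Pi_set)" "holomorphic2_on u (Om \<times> Pi_set)"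
      using assms(7,8) by (simp_all add: analytic2_on_imp_holomorphic2_on)
    fix p0 assume "p0 \<in> Pi_set"
    then obtain k :: nat and zs us e where zs: "\<forall>j<k. zs j \<in> Om \<and> weierstrass_poly_at (us j) (zs j) p0"
      and "0 < e" and product: "\<forall>p\<in>ball p0 e. \<forall>z. u (z, p) = (\<Prod>j<k. us j (z, p))"
      using assms(10) by blast
    have "\<forall>j<k. weierstrass_poly_at (us j) (zs j) p0"
      using zs by blast
    note cluster = weierstrass_product_zeros_cluster[OF this \<open>0 < e\<close> product]
    show "\<exists>C. finite C \<and> C \<subseteq> Om \<and>
        (\<forall>\<rho>>0. eventually (\<lambda>p. \<forall>z. (\<forall>c\<in>C. \<rho> \<le> dist z c) \<longrightarrow> u (z, p) \<noteq> 0) (nhds p0))"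
      using zs by (intro exI[of _ "zs ` {..<k}"] conjI allI impI cluster) auto
  qed (use assms in auto)
  show ?thesis
    by (rule unique_division)
qed

end
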